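(* Assume: (i) $Y := c_T(X_T)+\sum_{t=0}^{T-1}c_t(X_t,U_t)$, where $c_t:S\times A\to\mathbb{R}$ ($t=0,\dots,T-1$) and $c_T:S\to\mathbb{R}$ are bounded and upper semicontinuous; (ii) the transition kernel $Q$ is continuous in total variation, i.e., $(x_n,u_n)\to(x,u)$ implies $|Q(\cdot\mid x_n,u_n)-Q(\cdot\mid x,u)|(S)\to 0$. Let $\alpha\in(0,1]$. Define $J^\alpha_T:=c_T$ and, for $t=T-1,\dots,0$, $$\varphi^\alpha_t(x,u):=\sup_{\xi\in\mathcal{R}_\alpha(x,u)}\int_S J^\alpha_{t+1}\,\xi\,\mathrm{d}Q(\cdot\mid x,u),\quad v^\alpha_t:=c_t+\varphi^\alpha_t,\quad J^\alpha_t(x):=\inf_{u\in A}v^\alpha_t(x,u)\ \ (x\in S).$$ Then $J^\alpha_t$ is upper semicontinuous and bounded for all $t=0,1,\dots,T$. For every $\epsilon>0$ there is a deterministic Markov policy $\pi^*_\epsilon\in\Pi$ such that $\rho^{\pi^*_\epsilon}_{\alpha,x}(Y)\le J^\alpha_0(x)+\epsilon$ for all $x\in S$. In particular, $\inf_{\pi\in\Pi}\rho^\pi_{\alpha,x}(Y)\le J^\alpha_0(x)$ for all $x\in S$.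
   Context: Setting: $S$, $A$, $W$ are Borel spaces, $T\in\mathbb{N}$, $\Omega=(S\times A)^T\times S$ with Borel $\sigma$-algebra $\mathcal{B}(\Omega)$; $\omega=(x_0,u_0,\dots,x_{T-1},u_{T-1},x_T)$, $X_t(\omega)=x_t$, $U_t(\omega)=u_t$. $f:S\times A\times W\to S$ is Borel measurable, $P_D$ a distribution on $W$, and $Q(B\mid x,u)=P_D(\{d\in W: f(x,u,d)\in B\})$. $\Pi$ is the set of randomized history-dependent policies (Borel stochastic kernels $\pi_t$ on $A$ given $(S\times A)^t\times S$, $t=0,\dots,T-1$), which includes deterministic Markov policies; $P_x^\pi$ is the induced probability measure on $\Omega$ with $X_0=x$, $U_t\sim\pi_t(\cdot\mid\text{history})$, $X_{t+1}\sim Q(\cdot\mid X_t,U_t)$. For $(x,u)\in S\times A$, $\mathcal{R}_\alpha(x,u)$ is the set of Borel-measurable $\nu:S\to\mathbb{R}$ with $0\le\nu\le\alpha^{-1/T}$ $Q(\cdot\mid x,u)$-a.e. and $\int_S\nu\,\mathrm{d}Q(\cdot\mid x,u)=1$. $\mathcal{D}_\alpha$ is the set of tuples $(\xi_0,\dots,\xi_{T-1})$ where each $\xi_t(\cdot\mid\cdot,\cdot):S\times S\times A\to\mathbb{R}$ is Borel measurable and $\xi_t(\cdot\mid x,u)\in\mathcal{R}_\alpha(x,u)$ for every $(x,u)\in S\times A$. For $Y\in L^\infty(\Omega,\mathcal{B}(\Omega),P_x^\pi)$, $$\rho^\pi_{\alpha,x}(Y):=\sup_{(\xi_0,\dots,\xi_{T-1})\in\mathcal{D}_\alpha}\int_\Omega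 Y(\omega)\prod_{t=0}^{T-1}\xi_t(x_{t+1}\mid x_t,u_t)\,\mathrm{d}P_x^\pi(\omega).$$ *)

theory Defs
  imports "HOL-Probability.Probability"
begin

text \<open>Borel spaces are modelled as Borel subsets of Polish spaces (carrier sets of a
  polish_space type), carrying the subspace topology and the trace Borel sigma-algebra.\<close>

abbreviation MB :: "'x::topological_space set \<Rightarrow> 'x measure" where
  "MB X \<equiv> restrict_space borel X"

definition usc_on :: "'x::topological_space set \<Rightarrow> ('x \<Rightarrow> real) \<Rightarrow> bool" where
  "usc_on X g \<longleftrightarrow> (\<forall>x\<in>X. \<forall>s. (\<forall>n. s n \<in> X) \<longrightarrow> s \<longlonglongrightarrow> x \<longrightarrow>
      limsup (\<lambda>n. ereal (g (s n))) \<le> ereal (g x))"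

definition bounded_on :: "'x set \<Rightarrow> ('x \<Rightarrow> real) \<Rightarrow> bool" where
  "bounded_on X g \<longleftrightarrow> (\<exists>B. \<forall>x\<in>X. \<bar>g x\<bar> \<le> B)"

text \<open>Total variation |mu - nu|(space) of the signed measure mu - nu:
  supremum over finite measurable partitions.\<close>
definition tv_norm :: "'x measure \<Rightarrow> 'x measure \<Rightarrow> real" where
  "tv_norm \<mu> \<nu> = (SUP P \<in> {P. finite P \<and> disjoint P \<and> P \<subseteq> sets \<mu> \<and> \<Union>P = space \<mu>}.
      \<Sum>B\<in>P. \<bar>measure \<mu> B - measure \<nu> B\<bar>)"

text \<open>Transition kernel Q(. | x,u) = law of f(x,u,D), D ~ P_D.\<close>
definition Qk :: "'s::topological_space set \<Rightarrow> 'w measure \<Rightarrow> ('s \<Rightarrow> 'a \<Rightarrow> 'w \<Rightarrow> 's)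
    \<Rightarrow> 's \<Rightarrow> 'a \<Rightarrow> 's measure" where
  "Qk S PD f x u = distr PD (MB S) (\<lambda>d. f x u d)"

text \<open>Histories (x_0,u_0,...,u_{t-1},x_t), represented as a pair of extensional functions
  on {..t} and {..<t}; the sample space Omega is Hist S A T.\<close>
definition Hist :: "'s::topological_space set \<Rightarrow> 'a::topological_space set \<Rightarrow> nat
    \<Rightarrow> ((nat \<Rightarrow> 's) \<times> (nat \<Rightarrow> 'a)) measure" where
  "Hist S A t = (\<Pi>\<^sub>M i\<in>{..t}. MB S) \<Otimes>\<^sub>M (\<Pi>\<^sub>M i\<in>{..<t}. MB A)"

type_synonym ('s, 'a) policy = "nat \<Rightarrow> (nat \<Rightarrow> 's) \<times> (nat \<Rightarrow> 'a) \<Rightarrow> 'a measure"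

definition policies :: "'s::topological_space set \<Rightarrow> 'a::topological_space set \<Rightarrow> nat
    \<Rightarrow> ('s, 'a) policy set" where
  "policies S A T = {\<pi>. \<forall>t<T. \<pi> t \<in> Hist S A t \<rightarrow>\<^sub>M prob_algebra (MB A)}"

definition markov_policy :: "'a::topological_space set \<Rightarrow> (nat \<Rightarrow> 's \<Rightarrow> 'a) \<Rightarrow> ('s, 'a) policy" where
  "markov_policy A g = (\<lambda>t h. return (MB A) (g t (fst h t)))"

primrec path_meas :: "'s::topological_space set \<Rightarrow> 'a::topological_space set
    \<Rightarrow> ('s \<Rightarrow> 'a \<Rightarrow> 's measure) \<Rightarrow> ('s, 'a) policy \<Rightarrow> 's \<Rightarrow> nat
    \<Rightarrow> ((nat \<Rightarrow> 's) \<times> (nat \<Rightarrow> 'a)) measure" where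
  "path_meas S A Q \<pi> x 0 = return (Hist S A 0) ((\<lambda>i\<in>{..0::nat}. x), (\<lambda>i\<in>{..<0::nat}. undefined))"
| "path_meas S A Q \<pi> x (Suc t) =
     path_meas S A Q \<pi> x t \<bind> (\<lambda>h. \<pi> t h \<bind> (\<lambda>u. Q (fst h t) u \<bind>
       (\<lambda>y. return (Hist S A (Suc t)) ((fst h)(Suc t := y), (snd h)(t := u)))))"

definition R_alpha :: "'s::topological_space set \<Rightarrow> ('s \<Rightarrow> 'a \<Rightarrow> 's measure) \<Rightarrow> real \<Rightarrow> nat
    \<Rightarrow> 's \<Rightarrow> 'a \<Rightarrow> ('s \<Rightarrow> real) set" where
  "R_alpha S Q \<alpha> T x u = {\<nu>. \<nu> \<in> borel_measurable (MB S) \<and>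
      (AE y in Q x u. 0 \<le> \<nu> y \<and> \<nu> y \<le> \<alpha> powr (- 1 / real T)) \<and>
      integral\<^sup>L (Q x u) \<nu> = 1}"

text \<open>D_alpha: tuples (xi_0,...,xi_{T-1}); xi t y x u stands for xi_t(y | x,u).\<close>
definition D_alpha :: "'s::topological_space set \<Rightarrow> 'a::topological_space set
    \<Rightarrow> ('s \<Rightarrow> 'a \<Rightarrow> 's measure) \<Rightarrow> real \<Rightarrow> nat \<Rightarrow> (nat \<Rightarrow> 's \<Rightarrow> 's \<Rightarrow> 'a \<Rightarrow> real) set" where
  "D_alpha S A Q \<alpha> T = {\<xi>. \<forall>t<T.
      (\<lambda>(y, x, u). \<xi> t y x u) \<in> borel_measurable (MB S \<Otimes>\<^sub>M MB S \<Otimes>\<^sub>M MB A) \<and>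
      (\<forall>x\<in>S. \<forall>u\<in>A. (\<lambda>y. \<xi> t y x u) \<in> R_alpha S Q \<alpha> T x u)}"

definition rho :: "'s::topological_space set \<Rightarrow> 'a::topological_space set
    \<Rightarrow> ('s \<Rightarrow> 'a \<Rightarrow> 's measure) \<Rightarrow> real \<Rightarrow> nat \<Rightarrow> ('s, 'a) policy \<Rightarrow> 's
    \<Rightarrow> ((nat \<Rightarrow> 's) \<times> (nat \<Rightarrow> 'a) \<Rightarrow> real) \<Rightarrow> real" where
  "rho S A Q \<alpha> T \<pi> x Y = (SUP \<xi> \<in> D_alpha S A Q \<alpha> T.
      \<integral>\<omega>. Y \<omega> * (\<Prod>t<T. \<xi> t (fst \<omega> (Suc t)) (fst \<omega> t) (snd \<omega> t)) \<partial>path_meas S A Q \<pi> x T)"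

definition total_cost :: "nat \<Rightarrow> (nat \<Rightarrow> 's \<Rightarrow> 'a \<Rightarrow> real) \<Rightarrow> ('s \<Rightarrow> real)
    \<Rightarrow> (nat \<Rightarrow> 's) \<times> (nat \<Rightarrow> 'a) \<Rightarrow> real" where
  "total_cost T c cT \<omega> = cT (fst \<omega> T) + (\<Sum>t<T. c t (fst \<omega> t) (snd \<omega> t))"

definition phi :: "'s::topological_space set \<Rightarrow> ('s \<Rightarrow> 'a \<Rightarrow> 's measure) \<Rightarrow> real \<Rightarrow> nat
    \<Rightarrow> ('s \<Rightarrow> real) \<Rightarrow> 's \<Rightarrow> 'a \<Rightarrow> real" where
  "phi S Q \<alpha> T J x u = (SUP \<nu> \<in> R_alpha S Q \<alpha> T x u. \<integral>y. J y * \<nu> y \<partial>Q x u)"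

text \<open>Backward recursion: Jrec k = J_{T-k}.\<close>
fun Jrec :: "'s::topological_space set \<Rightarrow> 'a set \<Rightarrow> ('s \<Rightarrow> 'a \<Rightarrow> 's measure) \<Rightarrow> real \<Rightarrow> nat
    \<Rightarrow> (nat \<Rightarrow> 's \<Rightarrow> 'a \<Rightarrow> real) \<Rightarrow> ('s \<Rightarrow> real) \<Rightarrow> nat \<Rightarrow> 's \<Rightarrow> real" where
  "Jrec S A Q \<alpha> T c cT 0 = cT"
| "Jrec S A Q \<alpha> T c cT (Suc k) = (\<lambda>x. INF u \<in> A.
      c (T - Suc k) x u + phi S Q \<alpha> T (Jrec S A Q \<alpha> T c cT k) x u)"

definition J_alpha :: "'s::topological_space set \<Rightarrow> 'a set \<Rightarrow> ('s \<Rightarrow> 'a \<Rightarrow> 's measure) \<Rightarrow> real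
    \<Rightarrow> nat \<Rightarrow> (nat \<Rightarrow> 's \<Rightarrow> 'a \<Rightarrow> real) \<Rightarrow> ('s \<Rightarrow> real) \<Rightarrow> nat \<Rightarrow> 's \<Rightarrow> real" where
  "J_alpha S A Q \<alpha> T c cT t = Jrec S A Q \<alpha> T c cT (T - t)"

end

theory Submission
  imports Defs
begin

text \<open>With \<open>K = \<alpha> powr (-1/T)\<close>, the inner supremum \<open>\<phi>\<^sub>t(x,u)\<close> is a conditional value at risk:
  it equals \<open>min\<^sub>s s + K \<integral>(J - s)\<^sup>+ dQ(\<cdot>|x,u)\<close>, the minimum being attained at a quantile of \<open>J\<close>.
  Each function \<open>s + K \<integral>(J - s)\<^sup>+ dQ(\<cdot>|x,u)\<close> is continuous in \<open>(x,u)\<close> because \<open>Q\<close> is continuous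
  in total variation, so \<open>\<phi>\<^sub>t\<close> is upper semicontinuous; adding \<open>c\<^sub>t\<close> and taking the infimum over
  actions preserves this, which gives the regularity of \<open>J\<^sub>t\<close> by backward induction.
  Upper semicontinuous functions are Borel, so choosing along a countable dense set of actions the
  first one that is \<open>\<epsilon>/T\<close>-optimal gives measurable decision rules.  For the resulting Markov policy
  and any \<open>\<xi> \<in> D\<^sub>\<alpha>\<close>, each \<open>\<xi>\<^sub>t(\<cdot>|x,u)\<close> is an admissible density in the supremum defining \<open>\<phi>\<^sub>t\<close>, so
  integrating out one transition at a time shows
  \<open>E[(\<Sum>\<^sub>s\<^sub><\<^sub>t c\<^sub>s + J\<^sub>t(X\<^sub>t)) \<Prod>\<^sub>s\<^sub><\<^sub>t \<xi>\<^sub>s] \<le> J\<^sub>0(x) + t\<epsilon>/T\<close>; at \<open>t = T\<close> this bounds \<open>\<rho>\<close>.\<close>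

section \<open>Upper semicontinuous functions\<close>

lemma usc_on_borel_measurable:
  fixes g :: "'x::metric_space \<Rightarrow> real"
  assumes "usc_on X g" shows "g \<in> borel_measurable (MB X)"
proof (rule borel_measurableI_ge)
  fix y
  let ?C = "{x\<in>X. y \<le> g x}"
  have eq: "?C = X \<inter> closure ?C"
  proof
    show "?C \<subseteq> X \<inter> closure ?C" using closure_subset[of ?C] by auto
    show "X \<inter> closure ?C \<subseteq> ?C"
    proof
      fix x assume x: "x \<in> X \<inter> closure ?C"
      then obtain s where s: "\<forall>n. s n \<in> ?C" "s \<longlonglongrightarrow> x" using closure_sequential by blast
      have "ereal y \<le> limsup (\<lambda>n. ereal (g (s n)))"
        by (rule le_Limsup) (simp, rule always_eventually, use s in simp)
      also have "\<dots> \<le> ereal (g x)"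
        using assms[unfolded usc_on_def, rule_format, of x s] x s by blast
      finally show "x \<in> ?C" using x by auto
    qed
  qed
  have "{x \<in> space (MB X). y \<le> g x} = X \<inter> closure ?C"
    using eq by (simp add: space_restrict_space)
  also have "\<dots> \<in> sets (MB X)"
    unfolding sets_restrict_space using borel_closed[OF closed_closure] by (rule imageI)
  finally show "{x \<in> space (MB X). y \<le> g x} \<in> sets (MB X)" .
qed

lemma usc_on_borel_measurable_pair:
  fixes v :: "'s::polish_space \<Rightarrow> 'a::polish_space \<Rightarrow> real"
  assumes "usc_on (S \<times> A) (\<lambda>(x, u). v x u)"
  shows "(\<lambda>(x, u). v x u) \<in> borel_measurable (MB S \<Otimes>\<^sub>M MB A)"
proof -
  have "(\<lambda>z. z) \<in> MB S \<Otimes>\<^sub>M MB A \<rightarrow>\<^sub>M MB (S \<times> A)"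
  proof (rule measurable_restrict_space2)
    show "(\<lambda>z. z) \<in> space (MB S \<Otimes>\<^sub>M MB A) \<rightarrow> S \<times> A"
      by (auto simp: space_pair_measure space_restrict_space)
    have "(\<lambda>z. (fst z, snd z)) \<in> MB S \<Otimes>\<^sub>M MB A \<rightarrow>\<^sub>M borel \<Otimes>\<^sub>M borel"
      by (intro measurable_Pair measurable_compose[OF measurable_fst] measurable_compose[OF measurable_snd]
          measurable_restrict_space1) simp_all
    then show "(\<lambda>z. z) \<in> MB S \<Otimes>\<^sub>M MB A \<rightarrow>\<^sub>M borel" by (simp add: borel_prod)
  qed
  from measurable_compose[OF this usc_on_borel_measurable[OF assms]] show ?thesis by simp
qed

lemma usc_on_slice_fst:
  assumes "usc_on (S \<times> A) (\<lambda>(x, u). v x u)" "u \<in> A"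
  shows "usc_on S (\<lambda>x. v x u)"
  unfolding usc_on_def
proof (intro ballI allI impI)
  fix x s assume x: "x \<in> S" and s: "\<forall>n. s n \<in> S" "s \<longlonglongrightarrow> x"
  have "(\<lambda>n. (s n, u)) \<longlonglongrightarrow> (x, u)" using s by (intro tendsto_Pair) auto
  with assms x s show "limsup (\<lambda>n. ereal (v (s n) u)) \<le> ereal (v x u)"
    using assms(1)[unfolded usc_on_def, rule_format, of "(x, u)" "\<lambda>n. (s n, u)"] by auto
qed

lemma usc_on_slice_snd:
  assumes "usc_on (S \<times> A) (\<lambda>(x, u). v x u)" "x \<in> S"
  shows "usc_on A (\<lambda>u. v x u)"
  unfolding usc_on_def
proof (intro ballI allI impI)
  fix u s assume u: "u \<in> A" and s: "\<forall>n. s n \<in> A" "s \<longlonglongrightarrow> u"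
  have "(\<lambda>n. (x, s n)) \<longlonglongrightarrow> (x, u)" using s by (intro tendsto_Pair) auto
  with assms u s show "limsup (\<lambda>n. ereal (v x (s n))) \<le> ereal (v x u)"
    using assms(1)[unfolded usc_on_def, rule_format, of "(x, u)" "\<lambda>n. (x, s n)"] by auto
qed

lemma usc_on_add:
  assumes "usc_on X f" "usc_on X g" shows "usc_on X (\<lambda>x. f x + g x)"
  unfolding usc_on_def
proof (intro ballI allI impI)
  fix x s assume x: "x \<in> X" and s: "\<forall>n. s n \<in> X" "s \<longlonglongrightarrow> x"
  have "limsup (\<lambda>n. ereal (f (s n) + g (s n))) = limsup (\<lambda>n. ereal (f (s n)) + ereal (g (s n)))" by simp
  also have "\<dots> \<le> limsup (\<lambda>n. ereal (f (s n))) + limsup (\<lambda>n. ereal (g (s n)))"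
    by (rule ereal_limsup_add_mono)
  also have "\<dots> \<le> ereal (f x) + ereal (g x)"
    using assms x s unfolding usc_on_def by (intro add_mono) auto
  finally show "limsup (\<lambda>n. ereal (f (s n) + g (s n))) \<le> ereal (f x + g x)" by simp
qed

lemma usc_on_INF:
  assumes usc: "usc_on (S \<times> A) (\<lambda>(x, u). v x u)" and A: "A \<noteq> {}"
    and lb: "\<And>x u. x \<in> S \<Longrightarrow> u \<in> A \<Longrightarrow> L \<le> v x u"
  shows "usc_on S (\<lambda>x. INF u\<in>A. v x u)"
  unfolding usc_on_def
proof (intro ballI allI impI)
  fix x s assume x: "x \<in> S" and s: "\<forall>n. s n \<in> S" "s \<longlonglongrightarrow> x"
  let ?l = "limsup (\<lambda>n. ereal (INF u\<in>A. v (s n) u))"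
  have le: "?l \<le> ereal (v x u)" if u: "u \<in> A" for u
  proof -
    have "?l \<le> limsup (\<lambda>n. ereal (v (s n) u))"
    proof (rule Limsup_mono, rule always_eventually, rule allI)
      fix n
      have "bdd_below ((\<lambda>u. v (s n) u) ` A)" using s lb by (intro bdd_belowI2[where m=L]) auto
      then show "ereal (INF u\<in>A. v (s n) u) \<le> ereal (v (s n) u)"
        by (simp add: cINF_lower u)
    qed
    also have "\<dots> \<le> ereal (v x u)" using usc_on_slice_fst[OF usc u] x s unfolding usc_on_def by auto
    finally show ?thesis .
  qed
  show "?l \<le> ereal (INF u\<in>A. v x u)"
  proof (cases ?l)
    case (real r)
    have "r \<le> v x u" if "u \<in> A" for u using le[OF that] real by simp
    then have "r \<le> (INF u\<in>A. v x u)" using A by (intro cINF_greatest) auto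
    then show ?thesis using real by simp
  next
    case PInf
    from A obtain u where "u \<in> A" by auto
    from le[OF this] PInf show ?thesis by simp
  qed simp
qed

lemma bounded_on_INF:
  assumes A: "A \<noteq> {}" and B: "\<And>x u. x \<in> S \<Longrightarrow> u \<in> A \<Longrightarrow> \<bar>v x u\<bar> \<le> B"
  shows "bounded_on S (\<lambda>x. INF u\<in>A. v x u)"
  unfolding bounded_on_def
proof (intro exI ballI)
  fix x assume x: "x \<in> S"
  obtain u0 where u0: "u0 \<in> A" using A by auto
  have "bdd_below ((\<lambda>u. v x u) ` A)" using B x by (intro bdd_belowI2[where m="- B"]) (force simp: abs_le_iff)
  then have "(INF u\<in>A. v x u) \<le> B" using B[OF x u0] by (intro cINF_lower2[OF _ u0]) auto
  moreover have "- B \<le> (INF u\<in>A. v x u)" using B x by (intro cINF_greatest[OF A]) (force simp: abs_le_iff)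
  ultimately show "\<bar>INF u\<in>A. v x u\<bar> \<le> B" by simp
qed

lemma uniform_bound_finite:
  assumes "finite I" "\<And>i. i \<in> I \<Longrightarrow> \<exists>B. \<forall>x\<in>X i. \<bar>f i x\<bar> \<le> (B::real)"
  obtains B where "\<And>i x. i \<in> I \<Longrightarrow> x \<in> X i \<Longrightarrow> \<bar>f i x\<bar> \<le> B"
proof -
  obtain b where b: "\<And>i x. i \<in> I \<Longrightarrow> x \<in> X i \<Longrightarrow> \<bar>f i x\<bar> \<le> b i" using assms(2) by metis
  have "\<bar>f i x\<bar> \<le> (\<Sum>i\<in>I. \<bar>b i\<bar>)" if "i \<in> I" "x \<in> X i" for i x
    using b[OF that] member_le_sum[OF that(1), of "\<lambda>i. \<bar>b i\<bar>"] assms(1) by simp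
  then show ?thesis by (rule that)
qed

lemma limsup_le_of_tendsto:
  assumes "\<And>n. a n \<le> b n" "b \<longlonglongrightarrow> L"
  shows "limsup (\<lambda>n. ereal (a n)) \<le> ereal L"
proof -
  have "limsup (\<lambda>n. ereal (a n)) \<le> limsup (\<lambda>n. ereal (b n))"
    by (rule Limsup_mono) (use assms(1) in simp)
  also have "\<dots> = ereal L"
    by (rule lim_imp_Limsup) (use assms(2) in \<open>simp_all add: tendsto_ereal\<close>)
  finally show ?thesis .
qed

text \<open>The selector picks the first point of a countable dense set of actions that is \<open>e\<close>-optimal;
  upper semicontinuity in the action makes such a point exist.\<close>

lemma usc_measurable_selector:
  fixes v :: "'s::polish_space \<Rightarrow> 'a::polish_space \<Rightarrow> real"
  assumes usc: "usc_on (S \<times> A) (\<lambda>(x, u). v x u)" and A: "A \<noteq> {}"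
    and lb: "\<And>x u. x \<in> S \<Longrightarrow> u \<in> A \<Longrightarrow> L \<le> v x u" and e: "0 < e"
  obtains g where "g \<in> MB S \<rightarrow>\<^sub>M MB A" "\<And>x. x \<in> S \<Longrightarrow> v x (g x) \<le> (INF u\<in>A. v x u) + e"
proof -
  obtain D where D: "countable D" "D \<subseteq> A" "A \<subseteq> closure D" by (rule separable)
  have Dne: "D \<noteq> {}" using D A closure_empty by auto
  define d where "d n = from_nat_into D n" for n
  have dD: "d n \<in> D" for n unfolding d_def by (rule from_nat_into[OF Dne])
  define J where "J x = (INF u\<in>A. v x u)" for x
  have ex: "\<exists>n. v x (d n) < J x + e" if x: "x \<in> S" for x
  proof -
    have "bdd_below ((\<lambda>u. v x u) ` A)" using lb x by (intro bdd_belowI2[where m=L]) auto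
    from cINF_less_iff[OF A this, of "J x + e / 2"] e
    have "\<exists>u\<in>A. v x u < J x + e / 2" unfolding J_def by simp
    then obtain u where u: "u \<in> A" "v x u < J x + e / 2" by blast
    obtain s where s: "\<forall>n. s n \<in> D" "s \<longlonglongrightarrow> u" using D(3) u(1) closure_sequential by blast
    have "limsup (\<lambda>n. ereal (v x (s n))) \<le> ereal (v x u)"
      using usc_on_slice_snd[OF usc x] u(1) s D(2) unfolding usc_on_def by blast
    also have "\<dots> < ereal (v x u + e / 2)" using e by simp
    finally have "eventually (\<lambda>n. ereal (v x (s n)) < ereal (v x u + e / 2)) sequentially"
      by (rule Limsup_lessD)
    then obtain n where "v x (s n) < v x u + e / 2" by (auto dest: eventually_happens)
    moreover obtain m where "from_nat_into D m = s n" using from_nat_into_surj[OF D(1)] s(1) by blast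
    ultimately show ?thesis using u(2) unfolding d_def by (intro exI[of _ m]) simp
  qed
  define N where "N x = (LEAST n. v x (d n) < J x + e)" for x
  have "(\<lambda>x. v x (d n)) \<in> borel_measurable (MB S)" for n
    by (rule usc_on_borel_measurable, rule usc_on_slice_fst[OF usc]) (use dD D(2) in auto)
  moreover have "J \<in> borel_measurable (MB S)"
    unfolding J_def by (rule usc_on_borel_measurable, rule usc_on_INF[OF usc A lb])
  ultimately have "N \<in> MB S \<rightarrow>\<^sub>M count_space UNIV"
    unfolding N_def by measurable
  moreover have "d \<in> count_space UNIV \<rightarrow>\<^sub>M MB A"
    using dD D(2) by (auto simp: measurable_count_space_eq1 space_restrict_space)
  ultimately have "(\<lambda>x. d (N x)) \<in> MB S \<rightarrow>\<^sub>M MB A" by (rule measurable_compose)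
  moreover have "v x (d (N x)) \<le> (INF u\<in>A. v x u) + e" if "x \<in> S" for x
    using LeastI_ex[OF ex[OF that]] unfolding N_def J_def by simp
  ultimately show ?thesis by (rule that)
qed

section \<open>Integrals and total variation\<close>

lemma (in finite_measure) integrable_bounded:
  fixes f :: "_ \<Rightarrow> real"
  shows "f \<in> borel_measurable M \<Longrightarrow> (\<And>x. x \<in> space M \<Longrightarrow> \<bar>f x\<bar> \<le> C) \<Longrightarrow> integrable M f"
  by (intro integrable_const_bound[where B=C] AE_I2) auto

lemma abs_integral_le_prob:
  fixes f :: "_ \<Rightarrow> real"
  assumes M: "prob_space M" and f: "f \<in> borel_measurable M" and b: "\<And>x. x \<in> space M \<Longrightarrow> \<bar>f x\<bar> \<le> C"
  shows "\<bar>\<integral>x. f x \<partial>M\<bar> \<le> C"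
proof -
  interpret prob_space M by fact
  have "\<bar>\<integral>x. f x \<partial>M\<bar> \<le> (\<integral>x. \<bar>f x\<bar> \<partial>M)" by (rule integral_abs_bound)
  also have "\<dots> \<le> (\<integral>x. C \<partial>M)"
    using integrable_bounded[OF f b] b by (intro integral_mono) auto
  finally show ?thesis by (simp add: prob_space)
qed

lemma sum_measure_disjoint_le_1:
  assumes "prob_space \<mu>" "finite P" "disjoint P" "P \<subseteq> sets \<mu>"
  shows "(\<Sum>B\<in>P. measure \<mu> B) \<le> 1"
proof -
  interpret prob_space \<mu> by fact
  have "(\<Sum>B\<in>P. measure \<mu> B) = measure \<mu> (\<Union>P)"
    by (rule measure_Union'[symmetric]) (use assms in \<open>auto simp: fmeasurable_eq_sets\<close>)
  also have "\<dots> \<le> 1" by (rule prob_le_1)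
  finally show ?thesis .
qed

lemma tv_norm_bdd:
  assumes "prob_space \<mu>" "prob_space \<mu>'" "sets \<mu>' = sets \<mu>"
  shows "bdd_above ((\<lambda>P. \<Sum>B\<in>P. \<bar>measure \<mu> B - measure \<mu>' B\<bar>) `
      {P. finite P \<and> disjoint P \<and> P \<subseteq> sets \<mu> \<and> \<Union>P = space \<mu>})"
proof (rule bdd_aboveI2)
  fix P assume "P \<in> {P. finite P \<and> disjoint P \<and> P \<subseteq> sets \<mu> \<and> \<Union>P = space \<mu>}"
  then have P: "finite P" "disjoint P" "P \<subseteq> sets \<mu>" "P \<subseteq> sets \<mu>'" using assms(3) by auto
  have "(\<Sum>B\<in>P. \<bar>measure \<mu> B - measure \<mu>' B\<bar>) \<le> (\<Sum>B\<in>P. measure \<mu> B) + (\<Sum>B\<in>P. measure \<mu>' B)"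
    unfolding sum.distrib[symmetric] by (rule sum_mono) (smt (verit) measure_nonneg)
  also have "\<dots> \<le> 1 + 1"
    by (intro add_mono sum_measure_disjoint_le_1 assms P)
  finally show "(\<Sum>B\<in>P. \<bar>measure \<mu> B - measure \<mu>' B\<bar>) \<le> 2" by simp
qed

lemma measure_diff_le_tv_norm:
  assumes "prob_space \<mu>" "prob_space \<mu>'" "sets \<mu>' = sets \<mu>" "E \<in> sets \<mu>"
  shows "\<bar>measure \<mu> E - measure \<mu>' E\<bar> \<le> tv_norm \<mu> \<mu>'"
  unfolding tv_norm_def
proof (rule cSUP_upper2[OF tv_norm_bdd[OF assms(1-3)]])
  let ?P = "{E, space \<mu> - E}"
  have E: "E \<subseteq> space \<mu>" using assms(4) by (rule sets.sets_into_space)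
  show "?P \<in> {P. finite P \<and> disjoint P \<and> P \<subseteq> sets \<mu> \<and> \<Union>P = space \<mu>}"
    using E assms(4) by (auto simp: pairwise_def disjnt_def)
  show "\<bar>measure \<mu> E - measure \<mu>' E\<bar> \<le> (\<Sum>B\<in>?P. \<bar>measure \<mu> B - measure \<mu>' B\<bar>)"
    by (rule member_le_sum[where f="\<lambda>B. \<bar>measure \<mu> B - measure \<mu>' B\<bar>"]) auto
qed

lemma staircase_approx:
  fixes t M :: real and n :: nat
  assumes t: "0 \<le> t" "t \<le> M" and n: "1 \<le> n"
  defines "k \<equiv> real (card {j\<in>{1..n}. real j * M / real n \<le> t})"
  shows "M / real n * k \<le> t \<and> t \<le> M / real n * k + M / real n"
proof (cases "M = 0")
  case False
  then have Mp: "0 < M" using t by simp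
  have np: "0 < real n" using n by simp
  define s where "s = t * real n / M"
  have s: "0 \<le> s" "s \<le> real n" using t Mp np by (auto simp: s_def divide_le_eq mult_left_mono)
  have "{j\<in>{1..n}. real j * M / real n \<le> t} = {1..nat \<lfloor>s\<rfloor>}"
  proof (intro set_eqI iffI)
    fix j assume j: "j \<in> {j\<in>{1..n}. real j * M / real n \<le> t}"
    then have "real j \<le> s" using Mp np by (simp add: s_def field_simps)
    then show "j \<in> {1..nat \<lfloor>s\<rfloor>}" using j by (auto simp: le_nat_floor)
  next
    fix j assume j: "j \<in> {1..nat \<lfloor>s\<rfloor>}"
    then have "int j \<le> \<lfloor>s\<rfloor>" by auto
    then have js: "real j \<le> s" by (simp add: le_floor_iff)
    then have "j \<le> n" using s by linarith
    then show "j \<in> {j\<in>{1..n}. real j * M / real n \<le> t}"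
      using j js Mp np by (auto simp: s_def field_simps)
  qed
  then have k: "k = of_int \<lfloor>s\<rfloor>" using s by (simp add: k_def)
  have t_eq: "t = M / real n * s" using Mp np by (simp add: s_def)
  have c: "0 \<le> M / real n" using Mp np by simp
  have "M / real n * of_int \<lfloor>s\<rfloor> \<le> M / real n * s" by (rule mult_left_mono[OF of_int_floor_le c])
  moreover have "M / real n * s \<le> M / real n * (of_int \<lfloor>s\<rfloor> + 1)" by (rule mult_left_mono[OF _ c]) linarith
  ultimately show ?thesis unfolding k t_eq by (simp add: distrib_left)
qed (use t in simp)

lemma integral_staircase:
  assumes \<nu>: "prob_space \<nu>" and g: "g \<in> borel_measurable \<nu>"
    and gb: "\<And>y. y \<in> space \<nu> \<Longrightarrow> 0 \<le> g y \<and> g y \<le> M" and n: "1 \<le> n"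
  shows "\<bar>(\<integral>y. g y \<partial>\<nu>) - M / real n * (\<Sum>j\<in>{1..n}. measure \<nu> {y\<in>space \<nu>. real j * M / real n \<le> g y})\<bar>
      \<le> M / real n"
proof -
  interpret prob_space \<nu> by fact
  define E where "E j = {y\<in>space \<nu>. real j * M / real n \<le> g y}" for j :: nat
  have E: "E j \<in> sets \<nu>" for j unfolding E_def using g by measurable
  define h where "h y = M / real n * (\<Sum>j\<in>{1..n}. indicator (E j) y)" for y
  have hg: "h y \<le> g y \<and> g y \<le> h y + M / real n" if y: "y \<in> space \<nu>" for y
  proof -
    have "(\<Sum>j\<in>{1..n}. indicator (E j) y :: real) = real (card {j\<in>{1..n}. real j * M / real n \<le> g y})"
      using y by (simp add: E_def indicator_def sum.If_cases Int_def)
    then show ?thesis unfolding h_def using staircase_approx[OF _ _ n] gb[OF y] by simp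
  qed
  have ii: "integrable \<nu> (indicator (E j) :: _ \<Rightarrow> real)" for j
    using E by (intro integrable_const_bound[where B=1]) (auto simp: indicator_def)
  have ih: "integrable \<nu> h" unfolding h_def using ii by simp
  have ig: "integrable \<nu> g"
    by (rule integrable_const_bound[where B=M]) (use gb g in \<open>auto intro!: AE_I2\<close>)
  have "(\<integral>y. h y \<partial>\<nu>) = M / real n * (\<Sum>j\<in>{1..n}. measure \<nu> (E j))"
    unfolding h_def using sets.sets_into_space[OF E] by (simp add: ii Int_absorb2)
  moreover have "(\<integral>y. h y \<partial>\<nu>) \<le> (\<integral>y. g y \<partial>\<nu>)"
    by (rule integral_mono[OF ih ig]) (use hg in auto)
  moreover have "(\<integral>y. g y \<partial>\<nu>) \<le> (\<integral>y. h y + M / real n \<partial>\<nu>)"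
    by (rule integral_mono[OF ig]) (use hg ih in auto)
  moreover have "(\<integral>y. h y + M / real n \<partial>\<nu>) = (\<integral>y. h y \<partial>\<nu>) + M / real n"
    using ih by (simp add: prob_space)
  ultimately show ?thesis unfolding E_def by linarith
qed

lemma integral_diff_le_tv_norm:
  assumes \<mu>: "prob_space \<mu>" and \<mu>': "prob_space \<mu>'" and sets: "sets \<mu>' = sets \<mu>"
    and g: "g \<in> borel_measurable \<mu>" and gb: "\<And>y. y \<in> space \<mu> \<Longrightarrow> 0 \<le> g y \<and> g y \<le> M"
  shows "\<bar>(\<integral>y. g y \<partial>\<mu>) - (\<integral>y. g y \<partial>\<mu>')\<bar> \<le> M * tv_norm \<mu> \<mu>'"
proof -
  have sp: "space \<mu>' = space \<mu>" using sets by (rule sets_eq_imp_space_eq)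
  obtain y0 where "y0 \<in> space \<mu>" using prob_space.not_empty[OF \<mu>] by auto
  then have M0: "0 \<le> M" using gb by force
  define E where "E n j = {y\<in>space \<mu>. real j * M / real n \<le> g y}" for n j :: nat
  have bound: "\<bar>(\<integral>y. g y \<partial>\<mu>) - (\<integral>y. g y \<partial>\<mu>')\<bar> \<le> M * tv_norm \<mu> \<mu>' + 2 * M / real n" if n: "1 \<le> n" for n
  proof -
    have g': "g \<in> borel_measurable \<mu>'" using g by (simp add: measurable_cong_sets[OF sets refl])
    have gb': "\<And>y. y \<in> space \<mu>' \<Longrightarrow> 0 \<le> g y \<and> g y \<le> M" using gb sp by simp
    have E: "E n j \<in> sets \<mu>" for j unfolding E_def using g by measurable
    let ?A = "\<lambda>\<nu>. M / real n * (\<Sum>j\<in>{1..n}. measure \<nu> (E n j))"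
    have c: "0 \<le> M / real n" using M0 by simp
    have "?A \<mu> - ?A \<mu>' = M / real n * (\<Sum>j\<in>{1..n}. measure \<mu> (E n j) - measure \<mu>' (E n j))"
      by (simp only: sum_subtractf right_diff_distrib)
    then have "\<bar>?A \<mu> - ?A \<mu>'\<bar> = M / real n * \<bar>\<Sum>j\<in>{1..n}. measure \<mu> (E n j) - measure \<mu>' (E n j)\<bar>"
      by (simp only: abs_mult abs_of_nonneg[OF c])
    also have "\<dots> \<le> M / real n * (\<Sum>j\<in>{1..n}. tv_norm \<mu> \<mu>')"
      by (intro mult_left_mono[OF _ c] order.trans[OF sum_abs] sum_mono measure_diff_le_tv_norm \<mu> \<mu>' sets E)
    also have "\<dots> = M * tv_norm \<mu> \<mu>'" using n by simp
    finally show ?thesis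
      using integral_staircase[OF \<mu> g gb n] integral_staircase[OF \<mu>' g' gb' n] sp
      unfolding E_def by simp
  qed
  have "(\<lambda>n. M * tv_norm \<mu> \<mu>' + 2 * M / real n) \<longlonglongrightarrow> M * tv_norm \<mu> \<mu>'"
    using tendsto_add[OF tendsto_const lim_const_over_n[of "2 * M"]] by simp
  then show ?thesis by (rule LIMSEQ_le_const) (use bound in blast)
qed

lemma (in finite_measure) measure_ge_tendsto_left:
  assumes J: "J \<in> borel_measurable M"
  shows "(\<lambda>n. measure M {y\<in>space M. q - 1 / real (Suc n) \<le> J y}) \<longlonglongrightarrow> measure M {y\<in>space M. q \<le> J y}"
proof -
  define C where "C n = {y\<in>space M. q - 1 / real (Suc n) \<le> J y}" for n
  have "(\<Inter>n. C n) = {y\<in>space M. q \<le> J y}"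
  proof (intro set_eqI iffI)
    fix y assume y: "y \<in> (\<Inter>n. C n)"
    have "J y \<ge> q - 1 / real (Suc n)" for n using y by (auto simp: C_def)
    moreover have "(\<lambda>n. q - 1 / real (Suc n)) \<longlonglongrightarrow> q"
      using tendsto_diff[OF tendsto_const LIMSEQ_inverse_real_of_nat, of q] by (simp add: inverse_eq_divide)
    ultimately have "q \<le> J y" by (intro LIMSEQ_le_const2) auto
    then show "y \<in> {y\<in>space M. q \<le> J y}" using y by (auto simp: C_def)
  qed (auto simp: C_def intro: order.trans[rotated])
  moreover have "decseq C"
    unfolding C_def by (rule decseq_SucI) (auto simp: frac_le intro: order.trans[rotated])
  moreover have "range C \<subseteq> sets M" unfolding C_def using J by auto
  ultimately show ?thesis using finite_Lim_measure_decseq[of C] by (simp add: C_def)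
qed

lemma (in finite_measure) measure_ge_tendsto_right:
  assumes J: "J \<in> borel_measurable M"
  shows "(\<lambda>n. measure M {y\<in>space M. q + 1 / real (Suc n) \<le> J y}) \<longlonglongrightarrow> measure M {y\<in>space M. q < J y}"
proof -
  define C where "C n = {y\<in>space M. q + 1 / real (Suc n) \<le> J y}" for n
  have "(\<Union>n. C n) = {y\<in>space M. q < J y}"
  proof (intro set_eqI iffI)
    fix y assume y: "y \<in> {y\<in>space M. q < J y}"
    then have "0 < J y - q" by simp
    then obtain n where "inverse (real (Suc n)) < J y - q" using reals_Archimedean by blast
    then have "y \<in> C n" using y by (auto simp: C_def field_simps)
    then show "y \<in> (\<Union>n. C n)" by auto
  next
    fix y assume "y \<in> (\<Union>n. C n)"
    then obtain n where y: "y \<in> space M" "q + 1 / real (Suc n) \<le> J y" by (auto simp: C_def)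
    moreover have "0 < 1 / real (Suc n)" by simp
    ultimately have "q < J y" by linarith
    with y show "y \<in> {y\<in>space M. q < J y}" by simp
  qed
  moreover have "incseq C"
    unfolding C_def by (rule incseq_SucI) (auto simp: frac_le intro: order.trans[rotated])
  moreover have "range C \<subseteq> sets M" unfolding C_def using J by auto
  ultimately show ?thesis using finite_Lim_measure_incseq[of C] by (simp add: C_def)
qed

section \<open>Conditional value at risk\<close>

definition envelope :: "'s measure \<Rightarrow> 's::topological_space set \<Rightarrow> real \<Rightarrow> ('s \<Rightarrow> real) set" where
  "envelope \<mu> S K = {\<nu>. \<nu> \<in> borel_measurable (MB S) \<and> (AE y in \<mu>. 0 \<le> \<nu> y \<and> \<nu> y \<le> K) \<and> integral\<^sup>L \<mu> \<nu> = 1}"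

lemma R_alpha_eq_envelope: "R_alpha S Q \<alpha> T x u = envelope (Q x u) S (\<alpha> powr (- 1 / real T))"
  by (simp add: R_alpha_def envelope_def)

text \<open>The supremum of \<open>\<integral> J \<nu> d\<mu>\<close> over the envelope is the conditional value at risk of \<open>J\<close> at
  level \<open>1/K\<close>; \<open>s + K \<integral> (J - s)\<^sup>+ d\<mu>\<close> is its Rockafellar--Uryasev representation, whose minimum
  is attained at an upper \<open>1/K\<close>-quantile \<open>q\<close> of \<open>J\<close>.\<close>

locale cvar_setting =
  fixes \<mu> :: "'s::topological_space measure" and S :: "'s set" and J :: "'s \<Rightarrow> real" and B K :: real
  assumes prob: "prob_space \<mu>" and sets_eq: "sets \<mu> = sets (MB S)"
    and J_borel: "J \<in> borel_measurable (MB S)" and J_bounded: "\<And>y. y \<in> S \<Longrightarrow> \<bar>J y\<bar> \<le> B"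
    and one_le_K: "1 \<le> K"
begin

interpretation prob_space \<mu> by (rule prob)

lemma space_eq: "space \<mu> = S"
  using sets_eq_imp_space_eq[OF sets_eq] by (simp add: space_restrict_space)

lemma borel_measurable_eq: "borel_measurable (MB S) = borel_measurable \<mu>"
  by (rule measurable_cong_sets[OF sets_eq[symmetric] refl])

lemma J_measurable: "J \<in> borel_measurable \<mu>"
  using J_borel unfolding borel_measurable_eq .

lemma AE_J_bounded: "AE y in \<mu>. \<bar>J y\<bar> \<le> B"
  by (rule AE_I2) (use J_bounded space_eq in auto)

lemma B_nonneg: "0 \<le> B"
  using not_empty J_bounded space_eq by fastforce

lemma one_in_envelope: "(\<lambda>_. 1) \<in> envelope \<mu> S K"
  using one_le_K by (auto simp: envelope_def prob_space)

lemma envelope_props: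
  assumes "\<nu> \<in> envelope \<mu> S K"
  shows "\<nu> \<in> borel_measurable \<mu>" "AE y in \<mu>. 0 \<le> \<nu> y \<and> \<nu> y \<le> K" "(\<integral>y. \<nu> y \<partial>\<mu>) = 1"
  using assms borel_measurable_eq by (auto simp: envelope_def)

lemma
  assumes "\<nu> \<in> envelope \<mu> S K"
  shows integrable_envelope: "integrable \<mu> \<nu>"
    and integrable_J_envelope: "integrable \<mu> (\<lambda>y. J y * \<nu> y)"
proof -
  note \<nu> = envelope_props[OF assms]
  show "integrable \<mu> \<nu>"
    by (rule integrable_const_bound[where B=K]) (use \<nu> in auto)
  have "AE y in \<mu>. norm (J y * \<nu> y) \<le> B * K"
    using \<nu>(2) AE_J_bounded by eventually_elim (auto simp: abs_mult intro!: mult_mono)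
  then show "integrable \<mu> (\<lambda>y. J y * \<nu> y)"
    by (rule integrable_const_bound) (use \<nu>(1) J_measurable in measurable)
qed

lemma abs_integral_J_envelope_le:
  assumes "\<nu> \<in> envelope \<mu> S K"
  shows "\<bar>\<integral>y. J y * \<nu> y \<partial>\<mu>\<bar> \<le> B"
proof -
  note \<nu> = envelope_props[OF assms] and iv = integrable_envelope[OF assms]
  have "(\<integral>y. J y * \<nu> y \<partial>\<mu>) \<le> (\<integral>y. B * \<nu> y \<partial>\<mu>)"
    by (rule integral_mono_AE[OF integrable_J_envelope[OF assms]])
      (use iv in simp, use \<nu>(2) AE_J_bounded in \<open>eventually_elim, auto intro: mult_right_mono\<close>)
  moreover have "(\<integral>y. - B * \<nu> y \<partial>\<mu>) \<le> (\<integral>y. J y * \<nu> y \<partial>\<mu>)"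
  proof (rule integral_mono_AE[OF _ integrable_J_envelope[OF assms]])
    show "AE y in \<mu>. - B * \<nu> y \<le> J y * \<nu> y" using \<nu>(2) AE_J_bounded
    proof eventually_elim
      case (elim y)
      then have "- B \<le> J y" by auto
      from mult_right_mono[OF this] elim show ?case by auto
    qed
  qed (use iv in simp)
  ultimately show ?thesis using \<nu>(3) by simp
qed

lemma integral_J_envelope_le_RU:
  assumes "\<nu> \<in> envelope \<mu> S K"
  shows "(\<integral>y. J y * \<nu> y \<partial>\<mu>) \<le> s + K * (\<integral>y. max 0 (J y - s) \<partial>\<mu>)"
proof -
  note \<nu> = envelope_props[OF assms] and iv = integrable_envelope[OF assms]
  have im: "integrable \<mu> (\<lambda>y. max 0 (J y - s))"
    by (rule integrable_const_bound[where B="B + \<bar>s\<bar>"])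
      (use AE_J_bounded in \<open>eventually_elim, auto\<close>, use J_measurable in measurable)
  have "(\<integral>y. J y * \<nu> y \<partial>\<mu>) \<le> (\<integral>y. s * \<nu> y + K * max 0 (J y - s) \<partial>\<mu>)"
  proof (rule integral_mono_AE[OF integrable_J_envelope[OF assms]])
    show "integrable \<mu> (\<lambda>y. s * \<nu> y + K * max 0 (J y - s))" using iv im by simp
    show "AE y in \<mu>. J y * \<nu> y \<le> s * \<nu> y + K * max 0 (J y - s)"
      using \<nu>(2)
    proof eventually_elim
      case (elim y)
      have "J y * \<nu> y = s * \<nu> y + (J y - s) * \<nu> y" by (simp add: algebra_simps)
      also have "(J y - s) * \<nu> y \<le> max 0 (J y - s) * \<nu> y" using elim by (intro mult_right_mono) auto
      also have "\<dots> \<le> max 0 (J y - s) * K" using elim by (intro mult_left_mono) auto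
      finally show ?case by (simp add: mult.commute)
    qed
  qed
  also have "\<dots> = s + K * (\<integral>y. max 0 (J y - s) \<partial>\<mu>)" using iv im \<nu>(3) by simp
  finally show ?thesis .
qed

lemma upper_quantile:
  obtains q where "- B - 1 \<le> q" "q \<le> B"
    "1 \<le> K * measure \<mu> {y\<in>space \<mu>. q \<le> J y}" "K * measure \<mu> {y\<in>space \<mu>. q < J y} \<le> 1"
proof -
  define H where "H s = measure \<mu> {y\<in>space \<mu>. s \<le> J y}" for s
  define L where "L = - B - 1"
  define Z where "Z = {s. L \<le> s \<and> s \<le> B \<and> 1 / K \<le> H s}"
  define q where "q = Sup Z"
  have Kp: "0 < K" using one_le_K by simp
  have Sm: "{y\<in>space \<mu>. s \<le> J y} \<in> sets \<mu>" for s using J_measurable by measurable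
  have Hmono: "H t \<le> H s" if "s \<le> t" for s t
    unfolding H_def using that by (intro finite_measure_mono Sm) auto
  have "{y\<in>space \<mu>. L \<le> J y} = space \<mu>" using J_bounded space_eq by (force simp: L_def abs_le_iff)
  then have "L \<in> Z" using one_le_K B_nonneg by (simp add: Z_def L_def H_def prob_space)
  moreover have bddZ: "bdd_above Z" by (rule bdd_aboveI[where M=B]) (simp add: Z_def)
  ultimately have qL: "L \<le> q" and qB: "q \<le> B"
    unfolding q_def by (auto intro: cSup_upper cSup_least simp: Z_def)
  have below: "1 / K \<le> H s" if sq: "s < q" for s
  proof -
    obtain z where "z \<in> Z" "s < z" using less_cSupD[of Z s] \<open>L \<in> Z\<close> sq unfolding q_def by auto
    then show ?thesis using Hmono[of s z] by (auto simp: Z_def)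
  qed
  have "(\<lambda>n. H (q - 1 / real (Suc n))) \<longlonglongrightarrow> H q"
    unfolding H_def by (rule measure_ge_tendsto_left[OF J_measurable])
  then have "1 / K \<le> H q" by (rule LIMSEQ_le_const) (use below in auto)
  moreover have "measure \<mu> {y\<in>space \<mu>. q < J y} \<le> 1 / K"
  proof -
    define C where "C n = {y\<in>space \<mu>. q + 1 / real (Suc n) \<le> J y}" for n
    have "(\<lambda>n. measure \<mu> (C n)) \<longlonglongrightarrow> measure \<mu> {y\<in>space \<mu>. q < J y}"
      unfolding C_def by (rule measure_ge_tendsto_right[OF J_measurable])
    moreover have "measure \<mu> (C n) \<le> 1 / K" for n
    proof (cases "q + 1 / real (Suc n) \<le> B")
      case True
      have "q + 1 / real (Suc n) \<notin> Z"
        using cSup_upper[OF _ bddZ, of "q + 1 / real (Suc n)"] by (auto simp: q_def)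
      moreover have "L \<le> q + 1 / real (Suc n)" using qL by (simp add: add_increasing2)
      ultimately have "H (q + 1 / real (Suc n)) < 1 / K" using True by (auto simp: Z_def)
      then show ?thesis by (simp add: H_def C_def)
    next
      case False
      then have "C n = {}" using J_bounded space_eq by (force simp: C_def abs_le_iff)
      then show ?thesis using Kp by simp
    qed
    ultimately show ?thesis by (intro LIMSEQ_le_const2) auto
  qed
  ultimately show ?thesis using that[of q] qL qB Kp unfolding L_def H_def by (simp add: field_simps)
qed

lemma integral_J_quantile_density:
  assumes \<theta>: "\<theta> * measure \<mu> {y\<in>space \<mu>. J y = q} = 1 - K * measure \<mu> {y\<in>space \<mu>. q < J y}"
  shows "(\<integral>y. J y * (K * indicator {y\<in>space \<mu>. q < J y} y + \<theta> * indicator {y\<in>space \<mu>. J y = q} y) \<partial>\<mu>)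
    = q + K * (\<integral>y. max 0 (J y - q) \<partial>\<mu>)"
proof -
  define E where "E = {y\<in>space \<mu>. q < J y}"
  define F where "F = {y\<in>space \<mu>. J y = q}"
  have Eset: "E \<in> sets \<mu>" and Fset: "F \<in> sets \<mu>" unfolding E_def F_def using J_measurable by auto
  have iE: "integrable \<mu> (indicator E :: _ \<Rightarrow> real)" "integrable \<mu> (indicator F :: _ \<Rightarrow> real)"
    using Eset Fset by (auto intro!: integrable_const_bound[where B=1] simp: indicator_def)
  have iJE: "integrable \<mu> (\<lambda>y. J y * indicator E y)"
    by (rule integrable_const_bound[where B=B])
      (use AE_J_bounded in \<open>eventually_elim, use B_nonneg in \<open>auto simp: indicator_def\<close>\<close>,
       use J_measurable Eset in measurable)
  have "(\<integral>y. J y * (K * indicator E y + \<theta> * indicator F y) \<partial>\<mu>)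
      = (\<integral>y. K * (J y * indicator E y) + \<theta> * q * indicator F y \<partial>\<mu>)"
    by (rule Bochner_Integration.integral_cong[OF refl]) (auto simp: indicator_def E_def F_def)
  also have "\<dots> = K * (\<integral>y. J y * indicator E y \<partial>\<mu>) + \<theta> * q * measure \<mu> F"
    using iJE iE Fset by (simp add: Int_absorb2 sets.sets_into_space)
  finally have eq1: "(\<integral>y. J y * (K * indicator E y + \<theta> * indicator F y) \<partial>\<mu>)
      = K * (\<integral>y. J y * indicator E y \<partial>\<mu>) + \<theta> * q * measure \<mu> F" .
  have "(\<integral>y. max 0 (J y - q) \<partial>\<mu>) = (\<integral>y. J y * indicator E y - q * indicator E y \<partial>\<mu>)"
    by (rule Bochner_Integration.integral_cong[OF refl]) (auto simp: indicator_def E_def)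
  also have "\<dots> = (\<integral>y. J y * indicator E y \<partial>\<mu>) - q * measure \<mu> E"
    using iJE iE Eset by (simp add: Int_absorb2 sets.sets_into_space)
  finally have eq2: "(\<integral>y. max 0 (J y - q) \<partial>\<mu>) = (\<integral>y. J y * indicator E y \<partial>\<mu>) - q * measure \<mu> E" .
  have "\<theta> * measure \<mu> F * q = (1 - K * measure \<mu> E) * q" using \<theta> by (simp add: E_def F_def)
  then show ?thesis unfolding E_def[symmetric] F_def[symmetric] eq1 eq2 by (simp add: algebra_simps)
qed

lemma cvar_attained:
  obtains q \<nu> where "\<nu> \<in> envelope \<mu> S K" "- B - 1 \<le> q" "q \<le> B"
    "(\<integral>y. J y * \<nu> y \<partial>\<mu>) = q + K * (\<integral>y. max 0 (J y - q) \<partial>\<mu>)"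
proof -
  obtain q where qL: "- B - 1 \<le> q" and qB: "q \<le> B"
    and KEF: "1 \<le> K * measure \<mu> {y\<in>space \<mu>. q \<le> J y}" and KE: "K * measure \<mu> {y\<in>space \<mu>. q < J y} \<le> 1"
    by (rule upper_quantile)
  define E where "E = {y\<in>space \<mu>. q < J y}"
  define F where "F = {y\<in>space \<mu>. J y = q}"
  have Eset: "E \<in> sets \<mu>" and Fset: "F \<in> sets \<mu>" unfolding E_def F_def using J_measurable by auto
  have EF: "E \<inter> F = {}" by (auto simp: E_def F_def)
  have "{y\<in>space \<mu>. q \<le> J y} = E \<union> F" by (auto simp: E_def F_def)
  then have KEF': "1 \<le> K * (measure \<mu> E + measure \<mu> F)"
    using KEF finite_measure_Union[OF Eset Fset EF] by simp
  text \<open>Density \<open>K\<close> on \<open>{J > q}\<close>; the atom \<open>{J = q}\<close> receives the remaining mass.\<close>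
  define \<theta> where "\<theta> = (if measure \<mu> F = 0 then 0 else (1 - K * measure \<mu> E) / measure \<mu> F)"
  have KE': "K * measure \<mu> E \<le> 1" using KE by (simp add: E_def)
  have th: "0 \<le> \<theta>" "\<theta> \<le> K" "\<theta> * measure \<mu> F = 1 - K * measure \<mu> E"
  proof -
    show "0 \<le> \<theta>" using KE' by (simp add: \<theta>_def)
    show "\<theta> * measure \<mu> F = 1 - K * measure \<mu> E" using KE' KEF' by (auto simp: \<theta>_def)
    show "\<theta> \<le> K"
    proof (cases "measure \<mu> F = 0")
      case False
      then have "0 < measure \<mu> F" using measure_nonneg[of \<mu> F] by linarith
      then show ?thesis using KEF' by (simp add: \<theta>_def pos_divide_le_eq algebra_simps)
    qed (use one_le_K in \<open>simp add: \<theta>_def\<close>)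
  qed
  define \<nu> where "\<nu> y = K * indicator E y + \<theta> * indicator F y" for y
  have "integrable \<mu> (indicator E :: _ \<Rightarrow> real)" "integrable \<mu> (indicator F :: _ \<Rightarrow> real)"
    using Eset Fset by (auto intro!: integrable_const_bound[where B=1] simp: indicator_def)
  then have "(\<integral>y. \<nu> y \<partial>\<mu>) = K * measure \<mu> E + \<theta> * measure \<mu> F"
    using Eset Fset by (simp add: \<nu>_def Int_absorb2 sets.sets_into_space)
  moreover have "\<nu> \<in> borel_measurable \<mu>" unfolding \<nu>_def using Eset Fset by measurable
  moreover have "0 \<le> \<nu> y \<and> \<nu> y \<le> K" for y
    using th one_le_K EF by (auto simp: \<nu>_def indicator_def)
  ultimately have "\<nu> \<in> envelope \<mu> S K" using th borel_measurable_eq by (auto simp: envelope_def)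
  moreover have "(\<integral>y. J y * \<nu> y \<partial>\<mu>) = q + K * (\<integral>y. max 0 (J y - q) \<partial>\<mu>)"
    unfolding \<nu>_def E_def F_def by (rule integral_J_quantile_density) (use th in \<open>simp add: E_def F_def\<close>)
  ultimately show ?thesis using that qL qB by blast
qed

end

section \<open>The risk-averse decision model\<close>

locale mdp =
  fixes S :: "'s::polish_space set" and A :: "'a::polish_space set"
    and Q :: "'s \<Rightarrow> 'a \<Rightarrow> 's measure" and \<alpha> :: real and T :: nat
    and c :: "nat \<Rightarrow> 's \<Rightarrow> 'a \<Rightarrow> real" and cT :: "'s \<Rightarrow> real"
  assumes A_ne: "A \<noteq> {}" and T_pos: "1 \<le> T"
    and Q_prob: "\<And>x u. x \<in> S \<Longrightarrow> u \<in> A \<Longrightarrow> prob_space (Q x u)"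
    and Q_sets: "\<And>x u. x \<in> S \<Longrightarrow> u \<in> A \<Longrightarrow> sets (Q x u) = sets (MB S)"
    and Q_measurable: "(\<lambda>(x, u). Q x u) \<in> MB S \<Otimes>\<^sub>M MB A \<rightarrow>\<^sub>M prob_algebra (MB S)"
    and Q_tv: "\<forall>x\<in>S. \<forall>u\<in>A. \<forall>xs us. (\<forall>n. xs n \<in> S \<and> us n \<in> A) \<longrightarrow>
                 (\<lambda>n. (xs n, us n)) \<longlonglongrightarrow> (x, u) \<longrightarrow>
                 (\<lambda>n. tv_norm (Q (xs n) (us n)) (Q x u)) \<longlonglongrightarrow> 0"
    and \<alpha>: "0 < \<alpha>" "\<alpha> \<le> 1"
    and c_usc: "\<forall>t<T. usc_on (S \<times> A) (\<lambda>(x, u). c t x u) \<and> bounded_on (S \<times> A) (\<lambda>(x, u). c t x u)"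
    and cT_usc: "usc_on S cT" "bounded_on S cT"
begin

definition K :: real where "K = \<alpha> powr (- 1 / real T)"

lemma one_le_K: "1 \<le> K"
proof -
  have "\<alpha> powr (1 / real T) \<le> 1" "0 < \<alpha> powr (1 / real T)" using \<alpha> by (auto intro: powr_le1)
  moreover have "K = 1 / \<alpha> powr (1 / real T)"
    unfolding K_def using powr_minus_divide[of \<alpha> "1 / real T"] by simp
  ultimately show ?thesis by simp
qed

lemma R_alpha_eq: "R_alpha S Q \<alpha> T x u = envelope (Q x u) S K"
  by (simp add: R_alpha_eq_envelope K_def)

lemma cvar_setting_Q:
  "x \<in> S \<Longrightarrow> u \<in> A \<Longrightarrow> J \<in> borel_measurable (MB S) \<Longrightarrow> (\<And>y. y \<in> S \<Longrightarrow> \<bar>J y\<bar> \<le> B)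
    \<Longrightarrow> cvar_setting (Q x u) S J B K"
  by (intro cvar_setting.intro Q_prob Q_sets one_le_K)

lemma space_Q: "x \<in> S \<Longrightarrow> u \<in> A \<Longrightarrow> space (Q x u) = S"
  using sets_eq_imp_space_eq[OF Q_sets] by (simp add: space_restrict_space)

context
  fixes J :: "'s \<Rightarrow> real" and B :: real and x u
  assumes x: "x \<in> S" and u: "u \<in> A"
    and J: "J \<in> borel_measurable (MB S)" and J_bounded: "\<And>y. y \<in> S \<Longrightarrow> \<bar>J y\<bar> \<le> B"
begin

interpretation R: cvar_setting "Q x u" S J B K by (rule cvar_setting_Q[OF x u J J_bounded])

lemma phi_eq_SUP: "phi S Q \<alpha> T J x u = (SUP \<nu>\<in>envelope (Q x u) S K. \<integral>y. J y * \<nu> y \<partial>Q x u)"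
  by (simp add: phi_def R_alpha_eq)

lemma bdd_above_envelope_integrals: "bdd_above ((\<lambda>\<nu>. \<integral>y. J y * \<nu> y \<partial>Q x u) ` envelope (Q x u) S K)"
  by (rule bdd_aboveI2[where M=B]) (use R.abs_integral_J_envelope_le in fastforce)

lemma integral_le_phi: "\<nu> \<in> envelope (Q x u) S K \<Longrightarrow> (\<integral>y. J y * \<nu> y \<partial>Q x u) \<le> phi S Q \<alpha> T J x u"
  unfolding phi_eq_SUP by (rule cSUP_upper[OF _ bdd_above_envelope_integrals])

lemma phi_le_RU: "phi S Q \<alpha> T J x u \<le> s + K * (\<integral>y. max 0 (J y - s) \<partial>Q x u)"
  unfolding phi_eq_SUP using R.one_in_envelope by (intro cSUP_least R.integral_J_envelope_le_RU) auto

lemma phi_eq_RU_min: obtains q where "- B - 1 \<le> q" "q \<le> B"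
  "phi S Q \<alpha> T J x u = q + K * (\<integral>y. max 0 (J y - q) \<partial>Q x u)"
proof -
  obtain q \<nu> where "\<nu> \<in> envelope (Q x u) S K" "- B - 1 \<le> q" "q \<le> B"
    "(\<integral>y. J y * \<nu> y \<partial>Q x u) = q + K * (\<integral>y. max 0 (J y - q) \<partial>Q x u)"
    by (rule R.cvar_attained)
  with integral_le_phi phi_le_RU[of q] show ?thesis using that by fastforce
qed

lemma abs_phi_le: "\<bar>phi S Q \<alpha> T J x u\<bar> \<le> B"
proof -
  have "phi S Q \<alpha> T J x u \<le> B"
    unfolding phi_eq_SUP using R.one_in_envelope R.abs_integral_J_envelope_le
    by (intro cSUP_least) (auto simp: abs_le_iff)
  moreover have "- B \<le> phi S Q \<alpha> T J x u"
    using R.abs_integral_J_envelope_le[OF R.one_in_envelope] integral_le_phi[OF R.one_in_envelope] by linarith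
  ultimately show ?thesis by simp
qed

end

lemma integral_Q_tendsto:
  fixes g :: "'s \<Rightarrow> real"
  assumes xu: "x \<in> S" "u \<in> A" and xsus: "\<And>n. xs n \<in> S \<and> us n \<in> A" and lim: "(\<lambda>n. (xs n, us n)) \<longlonglongrightarrow> (x, u)"
    and g: "g \<in> borel_measurable (MB S)" and gb: "\<And>y. y \<in> S \<Longrightarrow> 0 \<le> g y \<and> g y \<le> M"
  shows "(\<lambda>n. \<integral>y. g y \<partial>Q (xs n) (us n)) \<longlonglongrightarrow> (\<integral>y. g y \<partial>Q x u)"
proof -
  have "(\<lambda>n. (\<integral>y. g y \<partial>Q (xs n) (us n)) - (\<integral>y. g y \<partial>Q x u)) \<longlonglongrightarrow> 0"
  proof (rule Lim_null_comparison)
    show "(\<lambda>n. M * tv_norm (Q (xs n) (us n)) (Q x u)) \<longlonglongrightarrow> 0"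
      using tendsto_mult_right_zero[of _ sequentially M] Q_tv xu xsus lim by simp
    have "\<bar>(\<integral>y. g y \<partial>Q (xs n) (us n)) - (\<integral>y. g y \<partial>Q x u)\<bar> \<le> M * tv_norm (Q (xs n) (us n)) (Q x u)" for n
      using xsus[of n] xu gb g
      by (intro integral_diff_le_tv_norm Q_prob) (auto simp: Q_sets space_Q measurable_cong_sets[OF Q_sets refl])
    then show "\<forall>\<^sub>F n in sequentially. norm ((\<integral>y. g y \<partial>Q (xs n) (us n)) - (\<integral>y. g y \<partial>Q x u))
        \<le> M * tv_norm (Q (xs n) (us n)) (Q x u)" by simp
  qed
  then show ?thesis by (simp add: LIM_zero_iff)
qed

lemma phi_usc:
  assumes J: "J \<in> borel_measurable (MB S)" and J_bounded: "\<And>y. y \<in> S \<Longrightarrow> \<bar>J y\<bar> \<le> B"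
  shows "usc_on (S \<times> A) (\<lambda>(x, u). phi S Q \<alpha> T J x u)"
  unfolding usc_on_def
proof (intro ballI allI impI)
  fix p w assume p: "p \<in> S \<times> A" and w: "\<forall>n. w n \<in> S \<times> A" "w \<longlonglongrightarrow> p"
  obtain x u where xu: "p = (x, u)" "x \<in> S" "u \<in> A" using p by auto
  define xs where "xs n = fst (w n)" for n
  define us where "us n = snd (w n)" for n
  have w_eq: "w = (\<lambda>n. (xs n, us n))" by (simp add: xs_def us_def)
  have xsus: "xs n \<in> S \<and> us n \<in> A" for n using w(1) by (auto simp: xs_def us_def mem_Times_iff)
  obtain q where q: "- B - 1 \<le> q" "q \<le> B"
    and phi_q: "phi S Q \<alpha> T J x u = q + K * (\<integral>y. max 0 (J y - q) \<partial>Q x u)"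
    by (rule phi_eq_RU_min[OF xu(2,3) J J_bounded])
  have gb: "0 \<le> max 0 (J y - q) \<and> max 0 (J y - q) \<le> 2 * B + 1" if "y \<in> S" for y
    using J_bounded[OF that] q by auto
  text \<open>The quantile at the limit point gives an upper bound along the whole sequence.\<close>
  have "(\<lambda>n. q + K * (\<integral>y. max 0 (J y - q) \<partial>Q (xs n) (us n))) \<longlonglongrightarrow> phi S Q \<alpha> T J x u"
    unfolding phi_q using gb J xsus w(2) xu
    by (intro tendsto_add tendsto_const tendsto_mult integral_Q_tendsto[where M="2 * B + 1"]) (auto simp: w_eq)
  then have "limsup (\<lambda>n. ereal (phi S Q \<alpha> T J (xs n) (us n))) \<le> ereal (phi S Q \<alpha> T J x u)"
    by (rule limsup_le_of_tendsto[rotated]) (use xsus J J_bounded in \<open>blast intro: phi_le_RU\<close>)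
  then show "limsup (\<lambda>n. ereal (case w n of (x, u) \<Rightarrow> phi S Q \<alpha> T J x u))
      \<le> ereal (case p of (x, u) \<Rightarrow> phi S Q \<alpha> T J x u)"
    by (simp add: w_eq xu)
qed

abbreviation Jt :: "nat \<Rightarrow> 's \<Rightarrow> real" where "Jt t \<equiv> J_alpha S A Q \<alpha> T c cT t"

definition v :: "nat \<Rightarrow> 's \<Rightarrow> 'a \<Rightarrow> real" where
  "v t x u = c t x u + phi S Q \<alpha> T (Jt (Suc t)) x u"

lemma J_alpha_final: "Jt T = cT"
  by (simp add: J_alpha_def)

lemma J_alpha_step:
  assumes "t < T" shows "Jt t x = (INF u\<in>A. v t x u)"
proof -
  have "T - t = Suc (T - Suc t)" using assms by simp
  then show ?thesis using assms by (simp add: J_alpha_def v_def)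
qed

lemma c_bounded: "t < T \<Longrightarrow> \<exists>B. \<forall>x\<in>S. \<forall>u\<in>A. \<bar>c t x u\<bar> \<le> B"
  using c_usc unfolding bounded_on_def by fastforce

lemma v_usc_bounded:
  assumes t: "t < T" and J: "usc_on S (Jt (Suc t))" "bounded_on S (Jt (Suc t))"
  shows "usc_on (S \<times> A) (\<lambda>(x, u). v t x u)" "\<exists>B. \<forall>x\<in>S. \<forall>u\<in>A. \<bar>v t x u\<bar> \<le> B"
proof -
  obtain BJ where BJ: "\<And>y. y \<in> S \<Longrightarrow> \<bar>Jt (Suc t) y\<bar> \<le> BJ" using J(2) by (auto simp: bounded_on_def)
  obtain Bc where Bc: "\<And>x u. x \<in> S \<Longrightarrow> u \<in> A \<Longrightarrow> \<bar>c t x u\<bar> \<le> Bc" using c_bounded[OF t] by blast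
  have Jm: "Jt (Suc t) \<in> borel_measurable (MB S)" by (rule usc_on_borel_measurable[OF J(1)])
  have "usc_on (S \<times> A) (\<lambda>p. (\<lambda>(x, u). c t x u) p + (\<lambda>(x, u). phi S Q \<alpha> T (Jt (Suc t)) x u) p)"
    using c_usc t by (intro usc_on_add phi_usc[OF Jm BJ]) simp
  then show "usc_on (S \<times> A) (\<lambda>(x, u). v t x u)" by (simp add: case_prod_beta' v_def)
  have "\<bar>v t x u\<bar> \<le> Bc + BJ" if "x \<in> S" "u \<in> A" for x u
    using Bc[OF that] abs_phi_le[OF that Jm BJ] unfolding v_def by linarith
  then show "\<exists>B. \<forall>x\<in>S. \<forall>u\<in>A. \<bar>v t x u\<bar> \<le> B" by blast
qed

lemma J_alpha_usc_bounded: "t \<le> T \<Longrightarrow> usc_on S (Jt t) \<and> bounded_on S (Jt t)"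
proof (induction t rule: inc_induct)
  case base
  show ?case using cT_usc J_alpha_final by simp
next
  case (step t)
  note v = v_usc_bounded[OF step.hyps(2) step.IH[THEN conjunct1] step.IH[THEN conjunct2]]
  obtain B where B: "\<And>x u. x \<in> S \<Longrightarrow> u \<in> A \<Longrightarrow> \<bar>v t x u\<bar> \<le> B" using v(2) by blast
  have lb: "- B \<le> v t x u" if "x \<in> S" "u \<in> A" for x u using B[OF that] by linarith
  have "Jt t = (\<lambda>x. INF u\<in>A. v t x u)" using J_alpha_step[OF step.hyps(2)] by (intro ext)
  then show ?case using usc_on_INF[OF v(1) A_ne lb] bounded_on_INF[OF A_ne B] by simp
qed

lemma v_usc: "t < T \<Longrightarrow> usc_on (S \<times> A) (\<lambda>(x, u). v t x u)"
  and v_bounded: "t < T \<Longrightarrow> \<exists>B. \<forall>x\<in>S. \<forall>u\<in>A. \<bar>v t x u\<bar> \<le> B"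
  using v_usc_bounded J_alpha_usc_bounded[of "Suc t"] by auto

lemma J_alpha_borel: "t \<le> T \<Longrightarrow> Jt t \<in> borel_measurable (MB S)"
  using J_alpha_usc_bounded by (blast intro: usc_on_borel_measurable)

lemma c_uniformly_bounded: obtains Bc where "\<And>t x u. t < T \<Longrightarrow> x \<in> S \<Longrightarrow> u \<in> A \<Longrightarrow> \<bar>c t x u\<bar> \<le> Bc"
proof -
  have "\<exists>B. \<forall>p\<in>S \<times> A. \<bar>c t (fst p) (snd p)\<bar> \<le> B" if "t \<in> {..<T}" for t
    using c_bounded that by auto
  then obtain Bc where "\<And>t p. t \<in> {..<T} \<Longrightarrow> p \<in> S \<times> A \<Longrightarrow> \<bar>c t (fst p) (snd p)\<bar> \<le> Bc"
    using uniform_bound_finite[of "{..<T}" "\<lambda>_. S \<times> A" "\<lambda>t p. c t (fst p) (snd p)"] by blast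
  then show ?thesis using that by fastforce
qed

lemma J_alpha_uniformly_bounded: obtains BJ where "\<And>t x. t \<le> T \<Longrightarrow> x \<in> S \<Longrightarrow> \<bar>Jt t x\<bar> \<le> BJ"
proof -
  have "\<exists>B. \<forall>x\<in>S. \<bar>Jt t x\<bar> \<le> B" if "t \<in> {..T}" for t
    using J_alpha_usc_bounded that by (auto simp: bounded_on_def)
  then obtain BJ where "\<And>t x. t \<in> {..T} \<Longrightarrow> x \<in> S \<Longrightarrow> \<bar>Jt t x\<bar> \<le> BJ"
    using uniform_bound_finite[of "{..T}" "\<lambda>_. S" Jt] by blast
  then show ?thesis by (intro that[of BJ]) auto
qed

lemma eps_optimal_decision_rules:
  assumes e: "0 < e"
  obtains g where "\<And>t. t < T \<Longrightarrow> g t \<in> MB S \<rightarrow>\<^sub>M MB A"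
    "\<And>t x. t < T \<Longrightarrow> x \<in> S \<Longrightarrow> v t x (g t x) \<le> Jt t x + e"
proof -
  have "\<exists>g. g \<in> MB S \<rightarrow>\<^sub>M MB A \<and> (\<forall>x\<in>S. v t x (g x) \<le> Jt t x + e)" if t: "t \<in> {..<T}" for t
  proof -
    obtain B where B: "\<And>x u. x \<in> S \<Longrightarrow> u \<in> A \<Longrightarrow> \<bar>v t x u\<bar> \<le> B" using v_bounded t by blast
    have lb: "- B \<le> v t x u" if "x \<in> S" "u \<in> A" for x u using B[OF that] by linarith
    have t': "t < T" using t by simp
    obtain g where "g \<in> MB S \<rightarrow>\<^sub>M MB A" "\<And>x. x \<in> S \<Longrightarrow> v t x (g x) \<le> (INF u\<in>A. v t x u) + e"
      using usc_measurable_selector[OF v_usc[OF t'] A_ne lb e] by blast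
    then show ?thesis using J_alpha_step[OF t'] by auto
  qed
  then obtain g where "\<forall>t\<in>{..<T}. g t \<in> MB S \<rightarrow>\<^sub>M MB A \<and> (\<forall>x\<in>S. v t x (g t x) \<le> Jt t x + e)"
    by (metis bchoice)
  then show ?thesis using that by blast
qed

end

section \<open>Histories and path measures\<close>

lemma integral_bind_subprob_kernel:
  fixes F :: "_ \<Rightarrow> real"
  assumes M: "finite_measure M" and N: "N \<in> M \<rightarrow>\<^sub>M subprob_algebra R"
    and F: "F \<in> borel_measurable R" and Fb: "\<And>z. z \<in> space R \<Longrightarrow> \<bar>F z\<bar> \<le> C"
  shows "(\<integral>z. F z \<partial>(M \<bind> N)) = (\<integral>x. (\<integral>z. F z \<partial>N x) \<partial>M)"
proof (rule integral_bind[OF F Fb N M, where B'=1])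
  show "AE x in M. emeasure (N x) (space (N x)) \<le> ennreal 1"
    using measurable_space[OF N] by (auto simp: space_subprob_algebra subprob_space.emeasure_space_le_1)
qed

definition hist_extend :: "nat \<Rightarrow> (nat \<Rightarrow> 's) \<times> (nat \<Rightarrow> 'a) \<Rightarrow> 'a \<Rightarrow> 's \<Rightarrow> (nat \<Rightarrow> 's) \<times> (nat \<Rightarrow> 'a)" where
  "hist_extend t h u y = ((fst h)(Suc t := y), (snd h)(t := u))"

lemma hist_extend_simps [simp]:
  "s \<le> t \<Longrightarrow> fst (hist_extend t h u y) s = fst h s" "fst (hist_extend t h u y) (Suc t) = y"
  "s < t \<Longrightarrow> snd (hist_extend t h u y) s = snd h s" "snd (hist_extend t h u y) t = u"
  by (auto simp: hist_extend_def)

lemma measurable_hist_state: "s \<le> t \<Longrightarrow> (\<lambda>h. fst h s) \<in> Hist S A t \<rightarrow>\<^sub>M MB S"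
  unfolding Hist_def by (rule measurable_compose[OF measurable_fst measurable_component_singleton]) auto

lemma measurable_hist_action: "s < t \<Longrightarrow> (\<lambda>h. snd h s) \<in> Hist S A t \<rightarrow>\<^sub>M MB A"
  unfolding Hist_def by (rule measurable_compose[OF measurable_snd measurable_component_singleton]) auto

lemma measurable_hist_extend:
  "(\<lambda>((h, u), y). hist_extend t h u y) \<in> (Hist S A t \<Otimes>\<^sub>M MB A) \<Otimes>\<^sub>M MB S \<rightarrow>\<^sub>M Hist S A (Suc t)"
  unfolding Hist_def hist_extend_def case_prod_beta'
proof (rule measurable_Pair)
  show "(\<lambda>q. (fst (fst (fst q)))(Suc t := snd q))
    \<in> (((\<Pi>\<^sub>M i\<in>{..t}. MB S) \<Otimes>\<^sub>M (\<Pi>\<^sub>M i\<in>{..<t}. MB A)) \<Otimes>\<^sub>M MB A) \<Otimes>\<^sub>M MB S \<rightarrow>\<^sub>M (\<Pi>\<^sub>M i\<in>{..Suc t}. MB S)"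
    by (rule measurable_fun_upd[where J="{..t}"]) (auto, measurable)
  show "(\<lambda>q. (snd (fst (fst q)))(t := snd (fst q)))
    \<in> (((\<Pi>\<^sub>M i\<in>{..t}. MB S) \<Otimes>\<^sub>M (\<Pi>\<^sub>M i\<in>{..<t}. MB A)) \<Otimes>\<^sub>M MB A) \<Otimes>\<^sub>M MB S \<rightarrow>\<^sub>M (\<Pi>\<^sub>M i\<in>{..<Suc t}. MB A)"
    by (rule measurable_fun_upd[where J="{..<t}"]) (auto, measurable)
qed

lemma hist_space_state: assumes "h \<in> space (Hist S A t)" "s \<le> t" shows "fst h s \<in> S"
  using measurable_space[OF measurable_hist_state[OF assms(2)] assms(1)] by (simp add: space_restrict_space)

lemma hist_space_action: assumes "h \<in> space (Hist S A t)" "s < t" shows "snd h s \<in> A"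
  using measurable_space[OF measurable_hist_action[OF assms(2)] assms(1)] by (simp add: space_restrict_space)

lemma hist_extend_space:
  assumes "h \<in> space (Hist S A t)" "u \<in> A" "y \<in> S"
  shows "hist_extend t h u y \<in> space (Hist S A (Suc t))"
  using measurable_space[OF measurable_hist_extend[of t S A], of "((h, u), y)"] assms
  by (simp add: space_pair_measure space_restrict_space)

context mdp
begin

definition transition :: "nat \<Rightarrow> (nat \<Rightarrow> 's) \<times> (nat \<Rightarrow> 'a) \<Rightarrow> 'a \<Rightarrow> ((nat \<Rightarrow> 's) \<times> (nat \<Rightarrow> 'a)) measure" where
  "transition t h u = Q (fst h t) u \<bind> (\<lambda>y. return (Hist S A (Suc t)) (hist_extend t h u y))"

definition step_kernel :: "('s, 'a) policy \<Rightarrow> nat \<Rightarrow> (nat \<Rightarrow> 's) \<times> (nat \<Rightarrow> 'a) \<Rightarrow> ((nat \<Rightarrow> 's) \<times> (nat \<Rightarrow> 'a)) measure" where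
  "step_kernel \<pi> t h = \<pi> t h \<bind> transition t h"

lemma path_meas_Suc: "path_meas S A Q \<pi> x (Suc t) = path_meas S A Q \<pi> x t \<bind> step_kernel \<pi> t"
  by (simp add: step_kernel_def[abs_def] transition_def[abs_def] hist_extend_def)

lemma measurable_return_hist_extend:
  "(\<lambda>((h, u), y). return (Hist S A (Suc t)) (hist_extend t h u y))
     \<in> (Hist S A t \<Otimes>\<^sub>M MB A) \<Otimes>\<^sub>M MB S \<rightarrow>\<^sub>M prob_algebra (Hist S A (Suc t))"
  using measurable_compose[OF measurable_hist_extend measurable_return_prob_space] by (simp add: case_prod_beta')

lemma measurable_transition:
  "(\<lambda>(h, u). transition t h u) \<in> Hist S A t \<Otimes>\<^sub>M MB A \<rightarrow>\<^sub>M prob_algebra (Hist S A (Suc t))"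
  unfolding transition_def case_prod_beta'
proof (rule measurable_bind_prob_space2)
  have "(\<lambda>p. (fst (fst p) t, snd p)) \<in> Hist S A t \<Otimes>\<^sub>M MB A \<rightarrow>\<^sub>M MB S \<Otimes>\<^sub>M MB A"
    by (intro measurable_Pair measurable_compose[OF measurable_fst measurable_hist_state] measurable_snd) simp
  from measurable_compose[OF this Q_measurable]
  show "(\<lambda>p. Q (fst (fst p) t) (snd p)) \<in> Hist S A t \<Otimes>\<^sub>M MB A \<rightarrow>\<^sub>M prob_algebra (MB S)" by simp
  show "(\<lambda>(p, y). return (Hist S A (Suc t)) (hist_extend t (fst p) (snd p) y))
    \<in> (Hist S A t \<Otimes>\<^sub>M MB A) \<Otimes>\<^sub>M MB S \<rightarrow>\<^sub>M prob_algebra (Hist S A (Suc t))"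
    using measurable_return_hist_extend by (simp add: case_prod_beta')
qed

lemma measurable_transition_action:
  assumes "h \<in> space (Hist S A t)"
  shows "transition t h \<in> MB A \<rightarrow>\<^sub>M prob_algebra (Hist S A (Suc t))"
  using measurable_Pair2[OF measurable_transition assms] by simp

lemma measurable_step_kernel:
  assumes "\<pi> t \<in> Hist S A t \<rightarrow>\<^sub>M prob_algebra (MB A)"
  shows "step_kernel \<pi> t \<in> Hist S A t \<rightarrow>\<^sub>M prob_algebra (Hist S A (Suc t))"
  unfolding step_kernel_def[abs_def] by (rule measurable_bind_prob_space2[OF assms measurable_transition])

lemma measurable_return_hist_extend_Q:
  assumes h: "h \<in> space (Hist S A t)" and u: "u \<in> A"
  shows "(\<lambda>y. return (Hist S A (Suc t)) (hist_extend t h u y)) \<in> Q (fst h t) u \<rightarrow>\<^sub>M subprob_algebra (Hist S A (Suc t))"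
proof -
  have "(h, u) \<in> space (Hist S A t \<Otimes>\<^sub>M MB A)" using h u by (simp add: space_pair_measure space_restrict_space)
  from measurable_Pair2[OF measurable_return_hist_extend this]
  have "(\<lambda>y. return (Hist S A (Suc t)) (hist_extend t h u y)) \<in> MB S \<rightarrow>\<^sub>M prob_algebra (Hist S A (Suc t))"
    by simp
  then show ?thesis
    by (simp add: measurable_cong_sets[OF Q_sets[OF hist_space_state[OF h order.refl] u] refl]
        measurable_prob_algebraD)
qed

lemma AE_transition:
  assumes h: "h \<in> space (Hist S A t)" and u: "u \<in> A" and P: "Measurable.pred (Hist S A (Suc t)) P"
    and ae: "AE y in Q (fst h t) u. P (hist_extend t h u y)"
  shows "AE z in transition t h u. P z"
  unfolding transition_def AE_bind[OF measurable_return_hist_extend_Q[OF h u] P]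
  using ae
proof (rule AE_mp[OF _ AE_I2])
  fix y assume "y \<in> space (Q (fst h t) u)"
  then have "hist_extend t h u y \<in> space (Hist S A (Suc t))"
    using hist_extend_space[OF h u] space_Q[OF hist_space_state[OF h order.refl] u] by simp
  then show "P (hist_extend t h u y) \<longrightarrow> (AE z in return (Hist S A (Suc t)) (hist_extend t h u y). P z)"
    by (simp add: AE_return[OF _ P])
qed

lemma integral_transition:
  fixes F :: "(nat \<Rightarrow> 's) \<times> (nat \<Rightarrow> 'a) \<Rightarrow> real"
  assumes h: "h \<in> space (Hist S A t)" and u: "u \<in> A"
    and F: "F \<in> borel_measurable (Hist S A (Suc t))" and Fb: "\<And>z. z \<in> space (Hist S A (Suc t)) \<Longrightarrow> \<bar>F z\<bar> \<le> C"
  shows "(\<integral>z. F z \<partial>transition t h u) = (\<integral>y. F (hist_extend t h u y) \<partial>Q (fst h t) u)"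
proof -
  have x: "fst h t \<in> S" by (rule hist_space_state[OF h order.refl])
  interpret prob_space "Q (fst h t) u" by (rule Q_prob[OF x u])
  have "(\<integral>z. F z \<partial>transition t h u)
      = (\<integral>y. (\<integral>z. F z \<partial>return (Hist S A (Suc t)) (hist_extend t h u y)) \<partial>Q (fst h t) u)"
    unfolding transition_def
    by (rule integral_bind_subprob_kernel[OF finite_measure_axioms measurable_return_hist_extend_Q[OF h u] F Fb])
  also have "\<dots> = (\<integral>y. F (hist_extend t h u y) \<partial>Q (fst h t) u)"
    using hist_extend_space[OF h u] space_Q[OF x u] integral_return[OF _ F]
    by (intro Bochner_Integration.integral_cong) auto
  finally show ?thesis .
qed

lemma path_meas_in_prob_algebra:
  assumes pi: "\<pi> \<in> policies S A T" and x: "x \<in> S" and t: "t \<le> T"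
  shows "path_meas S A Q \<pi> x t \<in> space (prob_algebra (Hist S A t))"
  using t
proof (induction t)
  case 0
  have "((\<lambda>i\<in>{..0::nat}. x), (\<lambda>i\<in>{..<0::nat}. undefined)) \<in> space (Hist S A 0)"
    using x by (simp add: Hist_def space_pair_measure space_PiM space_restrict_space PiE_def extensional_def)
  then show ?case by (simp add: space_prob_algebra prob_space_return)
next
  case (Suc t)
  have st: "step_kernel \<pi> t \<in> Hist S A t \<rightarrow>\<^sub>M prob_algebra (Hist S A (Suc t))"
    by (rule measurable_step_kernel) (use pi Suc.prems in \<open>auto simp: policies_def\<close>)
  have IH: "path_meas S A Q \<pi> x t \<in> space (prob_algebra (Hist S A t))" using Suc by simp
  show ?case unfolding path_meas_Suc space_prob_algebra
    using prob_space_bind'[OF IH st] sets_bind'[OF IH st] by simp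
qed

lemma
  assumes "\<pi> \<in> policies S A T" "x \<in> S" "t \<le> T"
  shows sets_path_meas: "sets (path_meas S A Q \<pi> x t) = sets (Hist S A t)"
    and prob_space_path_meas: "prob_space (path_meas S A Q \<pi> x t)"
  using path_meas_in_prob_algebra[OF assms] by (auto simp: space_prob_algebra)

lemma space_path_meas: "\<pi> \<in> policies S A T \<Longrightarrow> x \<in> S \<Longrightarrow> t \<le> T \<Longrightarrow> space (path_meas S A Q \<pi> x t) = space (Hist S A t)"
  by (rule sets_eq_imp_space_eq[OF sets_path_meas])

lemma borel_measurable_path_meas:
  "\<pi> \<in> policies S A T \<Longrightarrow> x \<in> S \<Longrightarrow> t \<le> T \<Longrightarrow> borel_measurable (path_meas S A Q \<pi> x t) = borel_measurable (Hist S A t)"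
  by (rule measurable_cong_sets[OF sets_path_meas refl])

lemma measurable_step_kernel_path:
  assumes pi: "\<pi> \<in> policies S A T" and x: "x \<in> S" and t: "t < T"
  shows "step_kernel \<pi> t \<in> path_meas S A Q \<pi> x t \<rightarrow>\<^sub>M subprob_algebra (Hist S A (Suc t))"
  using measurable_prob_algebraD[OF measurable_step_kernel] pi t
  by (simp add: policies_def measurable_cong_sets[OF sets_path_meas[OF pi x] refl])

lemma integral_path_meas_Suc:
  fixes F :: "(nat \<Rightarrow> 's) \<times> (nat \<Rightarrow> 'a) \<Rightarrow> real"
  assumes pi: "\<pi> \<in> policies S A T" and x: "x \<in> S" and t: "t < T"
    and F: "F \<in> borel_measurable (Hist S A (Suc t))" and Fb: "\<And>z. z \<in> space (Hist S A (Suc t)) \<Longrightarrow> \<bar>F z\<bar> \<le> C"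
  shows "(\<integral>z. F z \<partial>path_meas S A Q \<pi> x (Suc t)) = (\<integral>h. (\<integral>z. F z \<partial>step_kernel \<pi> t h) \<partial>path_meas S A Q \<pi> x t)"
    and "(\<lambda>h. \<integral>z. F z \<partial>step_kernel \<pi> t h) \<in> borel_measurable (path_meas S A Q \<pi> x t)"
proof -
  interpret prob_space "path_meas S A Q \<pi> x t" using prob_space_path_meas[OF pi x] t by simp
  show "(\<integral>z. F z \<partial>path_meas S A Q \<pi> x (Suc t)) = (\<integral>h. (\<integral>z. F z \<partial>step_kernel \<pi> t h) \<partial>path_meas S A Q \<pi> x t)"
    unfolding path_meas_Suc
    by (rule integral_bind_subprob_kernel[OF finite_measure_axioms measurable_step_kernel_path[OF pi x t] F Fb])
  show "(\<lambda>h. \<integral>z. F z \<partial>step_kernel \<pi> t h) \<in> borel_measurable (path_meas S A Q \<pi> x t)"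
    using measurable_compose[OF measurable_step_kernel_path[OF pi x t] integral_measurable_subprob_algebra[OF F]] by simp
qed

lemma integrable_path_meas:
  fixes F :: "(nat \<Rightarrow> 's) \<times> (nat \<Rightarrow> 'a) \<Rightarrow> real"
  assumes pi: "\<pi> \<in> policies S A T" and x: "x \<in> S" and t: "t \<le> T"
    and F: "F \<in> borel_measurable (Hist S A t)" and Fb: "\<And>h. h \<in> space (Hist S A t) \<Longrightarrow> \<bar>F h\<bar> \<le> C"
  shows "integrable (path_meas S A Q \<pi> x t) F"
proof -
  interpret prob_space "path_meas S A Q \<pi> x t" by (rule prob_space_path_meas[OF pi x t])
  show ?thesis
    using F Fb by (intro integrable_bounded) (simp_all add: borel_measurable_path_meas[OF pi x t] space_path_meas[OF pi x t])
qed

lemma AE_step_kernel: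
  assumes pi: "\<pi> t \<in> Hist S A t \<rightarrow>\<^sub>M prob_algebra (MB A)" and h: "h \<in> space (Hist S A t)"
    and P: "Measurable.pred (Hist S A (Suc t)) P"
    and ae: "\<And>u. u \<in> A \<Longrightarrow> AE y in Q (fst h t) u. P (hist_extend t h u y)"
  shows "AE z in step_kernel \<pi> t h. P z"
proof -
  have sets_pih: "sets (\<pi> t h) = sets (MB A)"
    using measurable_space[OF pi h] by (simp add: space_prob_algebra)
  have N: "transition t h \<in> \<pi> t h \<rightarrow>\<^sub>M subprob_algebra (Hist S A (Suc t))"
    using measurable_prob_algebraD[OF measurable_transition_action[OF h]]
    by (simp add: measurable_cong_sets[OF sets_pih refl])
  have "space (\<pi> t h) = A"
    using sets_eq_imp_space_eq[OF sets_pih] by (simp add: space_restrict_space)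
  then have "AE z in transition t h u. P z" if "u \<in> space (\<pi> t h)" for u
    using that by (intro AE_transition[OF h _ P ae]) simp_all
  then have "AE u in \<pi> t h. AE z in transition t h u. P z" by (rule AE_I2)
  then show ?thesis unfolding step_kernel_def AE_bind[OF N P] .
qed

definition xi_in_range :: "(nat \<Rightarrow> 's \<Rightarrow> 's \<Rightarrow> 'a \<Rightarrow> real) \<Rightarrow> nat \<Rightarrow> (nat \<Rightarrow> 's) \<times> (nat \<Rightarrow> 'a) \<Rightarrow> bool" where
  "xi_in_range \<xi> t h = (\<forall>s<t. \<xi> s (fst h (Suc s)) (fst h s) (snd h s) \<in> {0..K})"

lemma measurable_xi_hist:
  assumes xi: "\<xi> \<in> D_alpha S A Q \<alpha> T" and s: "s < T" "s < t"
  shows "(\<lambda>h. \<xi> s (fst h (Suc s)) (fst h s) (snd h s)) \<in> borel_measurable (Hist S A t)"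
proof -
  have m: "(\<lambda>(y, x, u). \<xi> s y x u) \<in> borel_measurable (MB S \<Otimes>\<^sub>M MB S \<Otimes>\<^sub>M MB A)"
    using xi s by (simp add: D_alpha_def)
  have "(\<lambda>h. (fst h (Suc s), fst h s, snd h s)) \<in> Hist S A t \<rightarrow>\<^sub>M MB S \<Otimes>\<^sub>M MB S \<Otimes>\<^sub>M MB A"
    using s by (intro measurable_Pair measurable_hist_state measurable_hist_action) auto
  from measurable_compose[OF this m] show ?thesis by simp
qed

lemma pred_xi_in_range:
  assumes xi: "\<xi> \<in> D_alpha S A Q \<alpha> T" and t: "t \<le> T"
  shows "Measurable.pred (Hist S A t) (xi_in_range \<xi> t)"
  unfolding xi_in_range_def
proof (intro pred_intros_countable(1) pred_intros_imp')
  fix s assume "s < t"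
  then have "(\<lambda>h. \<xi> s (fst h (Suc s)) (fst h s) (snd h s)) \<in> borel_measurable (Hist S A t)"
    using t by (intro measurable_xi_hist[OF xi]) auto
  then show "Measurable.pred (Hist S A t) (\<lambda>h. \<xi> s (fst h (Suc s)) (fst h s) (snd h s) \<in> {0..K})"
    by measurable
qed

lemma AE_path_xi_in_range:
  assumes pi: "\<pi> \<in> policies S A T" and x: "x \<in> S" and xi: "\<xi> \<in> D_alpha S A Q \<alpha> T"
  shows "t \<le> T \<Longrightarrow> AE h in path_meas S A Q \<pi> x t. xi_in_range \<xi> t h"
proof (induction t)
  case 0
  show ?case by (rule AE_I2) (simp add: xi_in_range_def)
next
  case (Suc t)
  then have t: "t < T" by simp
  have P: "Measurable.pred (Hist S A (Suc t)) (xi_in_range \<xi> (Suc t))" by (rule pred_xi_in_range[OF xi Suc.prems])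
  have "AE h in path_meas S A Q \<pi> x t. AE z in step_kernel \<pi> t h. xi_in_range \<xi> (Suc t) z"
    using Suc.IH[OF less_imp_le[OF t]] AE_space
  proof eventually_elim
    case (elim h)
    then have h: "h \<in> space (Hist S A t)" using space_path_meas[OF pi x] t by simp
    show ?case
    proof (rule AE_step_kernel[OF _ h P])
      show "\<pi> t \<in> Hist S A t \<rightarrow>\<^sub>M prob_algebra (MB A)" using pi t by (simp add: policies_def)
      fix u assume u: "u \<in> A"
      have "(\<lambda>y. \<xi> t y (fst h t) u) \<in> envelope (Q (fst h t) u) S K"
        using xi t hist_space_state[OF h order.refl] u by (simp add: D_alpha_def R_alpha_eq)
      then have "AE y in Q (fst h t) u. \<xi> t y (fst h t) u \<in> {0..K}"
        by (simp add: envelope_def)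
      then show "AE y in Q (fst h t) u. xi_in_range \<xi> (Suc t) (hist_extend t h u y)"
        by eventually_elim (use elim in \<open>auto simp: xi_in_range_def less_Suc_eq\<close>)
    qed
  qed
  then show ?case unfolding path_meas_Suc AE_bind[OF measurable_step_kernel_path[OF pi x t] P] .
qed

lemma markov_policy_in_policies:
  assumes g: "\<And>t. t < T \<Longrightarrow> g t \<in> MB S \<rightarrow>\<^sub>M MB A"
  shows "markov_policy A g \<in> policies S A T"
  unfolding policies_def markov_policy_def
proof (intro CollectI allI impI)
  fix t assume t: "t < T"
  have "(\<lambda>h. g t (fst h t)) \<in> Hist S A t \<rightarrow>\<^sub>M MB A"
    using measurable_compose[OF measurable_hist_state[of t t S A] g[OF t]] by simp
  from measurable_compose[OF this measurable_return_prob_space]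
  show "(\<lambda>h. return (MB A) (g t (fst h t))) \<in> Hist S A t \<rightarrow>\<^sub>M prob_algebra (MB A)" .
qed

lemma decision_rule_space:
  assumes "g \<in> MB S \<rightarrow>\<^sub>M MB A" "x \<in> S" shows "g x \<in> A"
  using measurable_space[OF assms(1)] assms(2) by (simp add: space_restrict_space)

lemma step_kernel_markov:
  assumes g: "\<And>t. t < T \<Longrightarrow> g t \<in> MB S \<rightarrow>\<^sub>M MB A" and t: "t < T" and h: "h \<in> space (Hist S A t)"
  shows "step_kernel (markov_policy A g) t h = transition t h (g t (fst h t))"
  unfolding step_kernel_def markov_policy_def
  using decision_rule_space[OF g[OF t] hist_space_state[OF h order.refl]]
  by (intro bind_return[OF measurable_prob_algebraD[OF measurable_transition_action[OF h]]])
    (simp add: space_restrict_space)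

section \<open>Backward induction along the path\<close>

text \<open>Clipping \<open>\<xi>\<close> to \<open>[0, K]\<close> changes nothing almost surely along paths, but bounds the product of the
  densities everywhere, so that all integrands below are bounded.\<close>

definition xi_clip :: "(nat \<Rightarrow> 's \<Rightarrow> 's \<Rightarrow> 'a \<Rightarrow> real) \<Rightarrow> nat \<Rightarrow> 's \<Rightarrow> 's \<Rightarrow> 'a \<Rightarrow> real" where
  "xi_clip \<xi> s y x u = max 0 (min K (\<xi> s y x u))"

definition lr_prod :: "(nat \<Rightarrow> 's \<Rightarrow> 's \<Rightarrow> 'a \<Rightarrow> real) \<Rightarrow> nat \<Rightarrow> (nat \<Rightarrow> 's) \<times> (nat \<Rightarrow> 'a) \<Rightarrow> real" where
  "lr_prod \<xi> t h = (\<Prod>s<t. xi_clip \<xi> s (fst h (Suc s)) (fst h s) (snd h s))"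

definition running_cost :: "nat \<Rightarrow> (nat \<Rightarrow> 's) \<times> (nat \<Rightarrow> 'a) \<Rightarrow> real" where
  "running_cost t h = (\<Sum>s<t. c s (fst h s) (snd h s))"

definition cost_to_go :: "(nat \<Rightarrow> 's \<Rightarrow> 's \<Rightarrow> 'a \<Rightarrow> real) \<Rightarrow> nat \<Rightarrow> (nat \<Rightarrow> 's) \<times> (nat \<Rightarrow> 'a) \<Rightarrow> real" where
  "cost_to_go \<xi> t h = (running_cost t h + Jt t (fst h t)) * lr_prod \<xi> t h"

lemma xi_clip_bounds: "0 \<le> xi_clip \<xi> s y x u \<and> xi_clip \<xi> s y x u \<le> K"
  using one_le_K by (simp add: xi_clip_def)

lemma lr_prod_bounds: "0 \<le> lr_prod \<xi> t h \<and> lr_prod \<xi> t h \<le> K ^ t"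
  unfolding lr_prod_def
  by (intro conjI prod_nonneg prod_le_power) (simp_all add: xi_clip_bounds one_le_K)

lemma lr_prod_extend: "lr_prod \<xi> (Suc t) (hist_extend t h u y) = lr_prod \<xi> t h * xi_clip \<xi> t y (fst h t) u"
  unfolding lr_prod_def prod.lessThan_Suc by (intro arg_cong2[where f="(*)"] prod.cong) auto

lemma running_cost_extend: "running_cost (Suc t) (hist_extend t h u y) = running_cost t h + c t (fst h t) u"
  unfolding running_cost_def sum.lessThan_Suc by (intro arg_cong2[where f="(+)"] sum.cong) auto

lemma lr_prod_measurable:
  assumes xi: "\<xi> \<in> D_alpha S A Q \<alpha> T" and t: "t \<le> T"
  shows "lr_prod \<xi> t \<in> borel_measurable (Hist S A t)"
  unfolding lr_prod_def[abs_def]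
proof (rule borel_measurable_prod)
  fix s assume "s \<in> {..<t}"
  then have "(\<lambda>h. \<xi> s (fst h (Suc s)) (fst h s) (snd h s)) \<in> borel_measurable (Hist S A t)"
    using t by (intro measurable_xi_hist[OF xi]) auto
  then show "(\<lambda>h. xi_clip \<xi> s (fst h (Suc s)) (fst h s) (snd h s)) \<in> borel_measurable (Hist S A t)"
    unfolding xi_clip_def by measurable
qed

lemma running_cost_measurable:
  assumes t: "t \<le> T"
  shows "running_cost t \<in> borel_measurable (Hist S A t)"
  unfolding running_cost_def[abs_def]
proof (rule borel_measurable_sum)
  fix s assume s: "s \<in> {..<t}"
  have "(\<lambda>(x, u). c s x u) \<in> borel_measurable (MB S \<Otimes>\<^sub>M MB A)"
    using c_usc s t by (intro usc_on_borel_measurable_pair) auto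
  moreover have "(\<lambda>h. (fst h s, snd h s)) \<in> Hist S A t \<rightarrow>\<^sub>M MB S \<Otimes>\<^sub>M MB A"
    using s by (intro measurable_Pair measurable_hist_state measurable_hist_action) auto
  ultimately show "(\<lambda>h. c s (fst h s) (snd h s)) \<in> borel_measurable (Hist S A t)"
    using measurable_compose by fastforce
qed

lemma cost_to_go_measurable:
  assumes xi: "\<xi> \<in> D_alpha S A Q \<alpha> T" and t: "t \<le> T"
  shows "cost_to_go \<xi> t \<in> borel_measurable (Hist S A t)"
proof -
  have "(\<lambda>h. Jt t (fst h t)) \<in> borel_measurable (Hist S A t)"
    using measurable_compose[OF measurable_hist_state[of t t S A] J_alpha_borel[OF t]] by simp
  then show ?thesis
    unfolding cost_to_go_def[abs_def] using lr_prod_measurable[OF xi t] running_cost_measurable[OF t]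
    by measurable
qed

lemma cost_to_go_bounded:
  assumes t: "t \<le> T"
  obtains C where "\<And>\<xi> h. h \<in> space (Hist S A t) \<Longrightarrow> \<bar>cost_to_go \<xi> t h\<bar> \<le> C"
proof -
  obtain Bc where Bc: "\<And>s x u. s < T \<Longrightarrow> x \<in> S \<Longrightarrow> u \<in> A \<Longrightarrow> \<bar>c s x u\<bar> \<le> Bc"
    using c_uniformly_bounded by blast
  obtain BJ where BJ: "\<And>s x. s \<le> T \<Longrightarrow> x \<in> S \<Longrightarrow> \<bar>Jt s x\<bar> \<le> BJ"
    using J_alpha_uniformly_bounded by blast
  have "\<bar>cost_to_go \<xi> t h\<bar> \<le> (real t * Bc + BJ) * K ^ t" if h: "h \<in> space (Hist S A t)" for \<xi> h
  proof -
    have "\<bar>running_cost t h\<bar> \<le> (\<Sum>s<t. Bc)" unfolding running_cost_def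
      using t Bc hist_space_state[OF h] hist_space_action[OF h] by (intro order.trans[OF sum_abs] sum_mono) auto
    moreover have "\<bar>Jt t (fst h t)\<bar> \<le> BJ" using BJ t hist_space_state[OF h] by simp
    ultimately have "\<bar>running_cost t h + Jt t (fst h t)\<bar> \<le> real t * Bc + BJ" by simp
    then show ?thesis
      unfolding cost_to_go_def abs_mult using lr_prod_bounds[of \<xi> t h] by (intro mult_mono) auto
  qed
  then show ?thesis by (rule that)
qed

lemma xi_clip_in_envelope:
  assumes xi: "\<xi> \<in> D_alpha S A Q \<alpha> T" and t: "t < T" and x: "x \<in> S" and u: "u \<in> A"
  shows "(\<lambda>y. xi_clip \<xi> t y x u) \<in> envelope (Q x u) S K"
proof -
  have m: "(\<lambda>(y, x, u). \<xi> t y x u) \<in> borel_measurable (MB S \<Otimes>\<^sub>M MB S \<Otimes>\<^sub>M MB A)"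
    and R: "(\<lambda>y. \<xi> t y x u) \<in> envelope (Q x u) S K"
    using xi t x u by (auto simp: D_alpha_def R_alpha_eq)
  have "(x, u) \<in> space (MB S \<Otimes>\<^sub>M MB A)" using x u by (simp add: space_pair_measure space_restrict_space)
  from measurable_Pair1[OF m this] have m': "(\<lambda>y. \<xi> t y x u) \<in> borel_measurable (MB S)" by simp
  then have mc: "(\<lambda>y. xi_clip \<xi> t y x u) \<in> borel_measurable (MB S)" unfolding xi_clip_def by measurable
  have "AE y in Q x u. 0 \<le> \<xi> t y x u \<and> \<xi> t y x u \<le> K" using R by (simp add: envelope_def)
  then have "AE y in Q x u. xi_clip \<xi> t y x u = \<xi> t y x u"
    by eventually_elim (simp add: xi_clip_def)
  then have "(\<integral>y. xi_clip \<xi> t y x u \<partial>Q x u) = (\<integral>y. \<xi> t y x u \<partial>Q x u)"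
    using mc m' by (intro integral_cong_AE) (simp_all add: measurable_cong_sets[OF Q_sets[OF x u] refl])
  then show ?thesis using R mc xi_clip_bounds by (auto simp: envelope_def)
qed

lemma abs_integral_step_kernel_le:
  fixes F :: "(nat \<Rightarrow> 's) \<times> (nat \<Rightarrow> 'a) \<Rightarrow> real"
  assumes pi: "\<pi> \<in> policies S A T" and t: "t < T" and h: "h \<in> space (Hist S A t)"
    and F: "F \<in> borel_measurable (Hist S A (Suc t))" and Fb: "\<And>z. z \<in> space (Hist S A (Suc t)) \<Longrightarrow> \<bar>F z\<bar> \<le> C"
  shows "\<bar>\<integral>z. F z \<partial>step_kernel \<pi> t h\<bar> \<le> C"
proof -
  have "step_kernel \<pi> t h \<in> space (prob_algebra (Hist S A (Suc t)))"
    using measurable_space[OF measurable_step_kernel h] pi t by (simp add: policies_def)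
  then have P: "prob_space (step_kernel \<pi> t h)" and sets: "sets (step_kernel \<pi> t h) = sets (Hist S A (Suc t))"
    by (auto simp: space_prob_algebra)
  show ?thesis
    using F Fb sets_eq_imp_space_eq[OF sets]
    by (intro abs_integral_le_prob[OF P]) (simp_all add: measurable_cong_sets[OF sets refl])
qed

lemma cost_to_go_extend:
  "cost_to_go \<xi> (Suc t) (hist_extend t h u y) = lr_prod \<xi> t h *
     ((running_cost t h + c t (fst h t) u) * xi_clip \<xi> t y (fst h t) u + Jt (Suc t) y * xi_clip \<xi> t y (fst h t) u)"
  by (simp add: cost_to_go_def lr_prod_extend running_cost_extend algebra_simps)

context
  fixes g :: "nat \<Rightarrow> 's \<Rightarrow> 'a" and e :: real
  assumes g_measurable: "\<And>t. t < T \<Longrightarrow> g t \<in> MB S \<rightarrow>\<^sub>M MB A"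
    and g_optimal: "\<And>t x. t < T \<Longrightarrow> x \<in> S \<Longrightarrow> v t x (g t x) \<le> Jt t x + e"
begin

lemma integral_step_kernel_markov:
  fixes F :: "(nat \<Rightarrow> 's) \<times> (nat \<Rightarrow> 'a) \<Rightarrow> real"
  assumes t: "t < T" and h: "h \<in> space (Hist S A t)"
    and F: "F \<in> borel_measurable (Hist S A (Suc t))" and Fb: "\<And>z. z \<in> space (Hist S A (Suc t)) \<Longrightarrow> \<bar>F z\<bar> \<le> C"
  shows "(\<integral>z. F z \<partial>step_kernel (markov_policy A g) t h)
    = (\<integral>y. F (hist_extend t h (g t (fst h t)) y) \<partial>Q (fst h t) (g t (fst h t)))"
proof -
  have "step_kernel (markov_policy A g) t h = transition t h (g t (fst h t))"
    by (rule step_kernel_markov[OF g_measurable t h])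
  then show ?thesis
    using integral_transition[OF h decision_rule_space[OF g_measurable[OF t] hist_space_state[OF h order.refl]] F Fb]
    by simp
qed

text \<open>One step of the backward induction: \<open>\<xi>\<^sub>t(\<cdot>|x,u)\<close> is admissible in the supremum defining
  \<open>\<phi>\<^sub>t(x,u)\<close>, and \<open>g\<^sub>t\<close> is \<open>e\<close>-optimal for \<open>v\<^sub>t\<close>.\<close>

lemma integral_step_kernel_lr_prod_cost_to_go:
  assumes xi: "\<xi> \<in> D_alpha S A Q \<alpha> T" and t: "t < T" and h: "h \<in> space (Hist S A t)"
  shows "(\<integral>z. lr_prod \<xi> (Suc t) z \<partial>step_kernel (markov_policy A g) t h) = lr_prod \<xi> t h"
    and "(\<integral>z. cost_to_go \<xi> (Suc t) z \<partial>step_kernel (markov_policy A g) t h) \<le> cost_to_go \<xi> t h + e * lr_prod \<xi> t h"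
proof -
  define x where "x = fst h t"
  define u where "u = g t x"
  have x: "x \<in> S" unfolding x_def by (rule hist_space_state[OF h order.refl])
  have u: "u \<in> A" unfolding u_def by (rule decision_rule_space[OF g_measurable[OF t] x])
  have tT: "Suc t \<le> T" using t by simp
  obtain BJ where BJ0: "\<And>s y. s \<le> T \<Longrightarrow> y \<in> S \<Longrightarrow> \<bar>Jt s y\<bar> \<le> BJ"
    using J_alpha_uniformly_bounded by blast
  have BJ: "\<And>y. y \<in> S \<Longrightarrow> \<bar>Jt (Suc t) y\<bar> \<le> BJ" using BJ0[OF tT] .
  have J: "Jt (Suc t) \<in> borel_measurable (MB S)" using J_alpha_borel t by simp
  interpret R: cvar_setting "Q x u" S "Jt (Suc t)" BJ K by (rule cvar_setting_Q[OF x u J BJ])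
  have env: "(\<lambda>y. xi_clip \<xi> t y x u) \<in> envelope (Q x u) S K" by (rule xi_clip_in_envelope[OF xi t x u])
  note iv = R.integrable_envelope[OF env] and ivJ = R.integrable_J_envelope[OF env]
  have int1: "(\<integral>y. xi_clip \<xi> t y x u \<partial>Q x u) = 1" using env by (simp add: envelope_def)
  have lr: "\<bar>lr_prod \<xi> (Suc t) z\<bar> \<le> K ^ Suc t" for z using lr_prod_bounds[of \<xi> "Suc t" z] by simp
  have "(\<integral>z. lr_prod \<xi> (Suc t) z \<partial>step_kernel (markov_policy A g) t h)
      = (\<integral>y. lr_prod \<xi> t h * xi_clip \<xi> t y x u \<partial>Q x u)"
    unfolding integral_step_kernel_markov[OF t h lr_prod_measurable[OF xi tT] lr] by (simp add: lr_prod_extend x_def u_def)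
  also have "\<dots> = lr_prod \<xi> t h" using int1 by simp
  finally show "(\<integral>z. lr_prod \<xi> (Suc t) z \<partial>step_kernel (markov_policy A g) t h) = lr_prod \<xi> t h" .
  obtain C where C: "\<And>\<xi> h. h \<in> space (Hist S A (Suc t)) \<Longrightarrow> \<bar>cost_to_go \<xi> (Suc t) h\<bar> \<le> C"
    by (rule cost_to_go_bounded[OF tT]) blast
  have "(\<integral>z. cost_to_go \<xi> (Suc t) z \<partial>step_kernel (markov_policy A g) t h)
      = (\<integral>y. cost_to_go \<xi> (Suc t) (hist_extend t h u y) \<partial>Q x u)"
    unfolding x_def u_def by (rule integral_step_kernel_markov[OF t h cost_to_go_measurable[OF xi tT] C])
  also have "\<dots> = lr_prod \<xi> t h * ((running_cost t h + c t x u) + (\<integral>y. Jt (Suc t) y * xi_clip \<xi> t y x u \<partial>Q x u))"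
    using iv ivJ int1 by (simp add: cost_to_go_extend x_def)
  also have "\<dots> \<le> lr_prod \<xi> t h * (running_cost t h + v t x u)"
    using integral_le_phi[OF x u J BJ env] lr_prod_bounds[of \<xi> t h]
    by (intro mult_left_mono) (auto simp: v_def)
  also have "\<dots> \<le> lr_prod \<xi> t h * (running_cost t h + Jt t x + e)"
    using g_optimal[OF t x] lr_prod_bounds[of \<xi> t h] by (intro mult_left_mono) (auto simp: u_def)
  also have "\<dots> = cost_to_go \<xi> t h + e * lr_prod \<xi> t h" by (simp add: cost_to_go_def x_def algebra_simps)
  finally show "(\<integral>z. cost_to_go \<xi> (Suc t) z \<partial>step_kernel (markov_policy A g) t h) \<le> cost_to_go \<xi> t h + e * lr_prod \<xi> t h" .
qed

lemma integral_path_meas_Suc_lr_prod_cost_to_go: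
  assumes x: "x \<in> S" and xi: "\<xi> \<in> D_alpha S A Q \<alpha> T" and t: "t < T"
  defines "P \<equiv> path_meas S A Q (markov_policy A g) x"
  shows "(\<integral>h. lr_prod \<xi> (Suc t) h \<partial>P (Suc t)) = (\<integral>h. lr_prod \<xi> t h \<partial>P t)"
    and "(\<integral>h. cost_to_go \<xi> (Suc t) h \<partial>P (Suc t)) \<le> (\<integral>h. cost_to_go \<xi> t h \<partial>P t) + e * (\<integral>h. lr_prod \<xi> t h \<partial>P t)"
proof -
  let ?\<pi> = "markov_policy A g"
  have pi: "?\<pi> \<in> policies S A T" by (rule markov_policy_in_policies[OF g_measurable])
  have tle: "t \<le> T" and tT: "Suc t \<le> T" using t by simp_all
  note spP = space_path_meas[OF pi x tle] and mP = borel_measurable_path_meas[OF pi x tle]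
  note step = integral_step_kernel_lr_prod_cost_to_go[OF xi t]
  have lr: "\<bar>lr_prod \<xi> s z\<bar> \<le> K ^ s" for s z using lr_prod_bounds[of \<xi> s z] by simp
  obtain C where C: "\<And>\<xi> h. h \<in> space (Hist S A (Suc t)) \<Longrightarrow> \<bar>cost_to_go \<xi> (Suc t) h\<bar> \<le> C"
    by (rule cost_to_go_bounded[OF tT]) blast
  obtain C' where C': "\<And>\<xi> h. h \<in> space (Hist S A t) \<Longrightarrow> \<bar>cost_to_go \<xi> t h\<bar> \<le> C'"
    by (rule cost_to_go_bounded[OF tle]) blast
  have i_lr: "integrable (P t) (lr_prod \<xi> t)"
    unfolding P_def by (rule integrable_path_meas[OF pi x tle lr_prod_measurable[OF xi tle] lr])
  have i_cost: "integrable (P t) (cost_to_go \<xi> t)"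
    unfolding P_def by (rule integrable_path_meas[OF pi x tle cost_to_go_measurable[OF xi tle] C'])
  note ip_lr = integral_path_meas_Suc[OF pi x t lr_prod_measurable[OF xi tT] lr]
  note ip_cost = integral_path_meas_Suc[OF pi x t cost_to_go_measurable[OF xi tT] C]
  show "(\<integral>h. lr_prod \<xi> (Suc t) h \<partial>P (Suc t)) = (\<integral>h. lr_prod \<xi> t h \<partial>P t)"
    unfolding P_def ip_lr(1) using step(1) spP by (intro Bochner_Integration.integral_cong) auto
  have "(\<integral>h. cost_to_go \<xi> (Suc t) h \<partial>P (Suc t)) = (\<integral>h. (\<integral>z. cost_to_go \<xi> (Suc t) z \<partial>step_kernel ?\<pi> t h) \<partial>P t)"
    unfolding P_def by (rule ip_cost(1))
  also have "\<dots> \<le> (\<integral>h. cost_to_go \<xi> t h + e * lr_prod \<xi> t h \<partial>P t)"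
  proof (rule integral_mono)
    show "integrable (P t) (\<lambda>h. \<integral>z. cost_to_go \<xi> (Suc t) z \<partial>step_kernel ?\<pi> t h)"
      unfolding P_def using ip_cost(2) abs_integral_step_kernel_le[OF pi t _ cost_to_go_measurable[OF xi tT] C]
      by (intro integrable_path_meas[OF pi x tle]) (auto simp: mP)
  qed (use i_lr i_cost step(2) spP in \<open>auto simp: P_def\<close>)
  also have "\<dots> = (\<integral>h. cost_to_go \<xi> t h \<partial>P t) + e * (\<integral>h. lr_prod \<xi> t h \<partial>P t)"
    using i_lr i_cost by simp
  finally show "(\<integral>h. cost_to_go \<xi> (Suc t) h \<partial>P (Suc t)) \<le> (\<integral>h. cost_to_go \<xi> t h \<partial>P t) + e * (\<integral>h. lr_prod \<xi> t h \<partial>P t)" .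
qed

lemma backward_induction:
  assumes x: "x \<in> S" and xi: "\<xi> \<in> D_alpha S A Q \<alpha> T"
  shows "t \<le> T \<Longrightarrow> (\<integral>h. lr_prod \<xi> t h \<partial>path_meas S A Q (markov_policy A g) x t) = 1 \<and>
    (\<integral>h. cost_to_go \<xi> t h \<partial>path_meas S A Q (markov_policy A g) x t) \<le> Jt 0 x + real t * e"
proof (induction t)
  case 0
  let ?h0 = "((\<lambda>i\<in>{..0::nat}. x), (\<lambda>i\<in>{..<0::nat}. undefined :: 'a))"
  have h0: "?h0 \<in> space (Hist S A 0)"
    using x by (simp add: Hist_def space_pair_measure space_PiM space_restrict_space PiE_def extensional_def)
  show ?case
    using integral_return[OF h0 lr_prod_measurable[OF xi]] integral_return[OF h0 cost_to_go_measurable[OF xi]]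
    by (simp add: lr_prod_def cost_to_go_def running_cost_def)
next
  case (Suc t)
  then have "t < T" by simp
  with Suc.IH integral_path_meas_Suc_lr_prod_cost_to_go[OF x xi this] show ?case
    by (simp add: algebra_simps)
qed

end
lemma one_in_D_alpha: "(\<lambda>t y x u. 1) \<in> D_alpha S A Q \<alpha> T"
proof -
  have "(\<lambda>y. 1::real) \<in> R_alpha S Q \<alpha> T x u" if "x \<in> S" "u \<in> A" for x u
  proof -
    interpret prob_space "Q x u" by (rule Q_prob[OF that])
    show ?thesis using one_le_K by (simp add: R_alpha_eq envelope_def prob_space)
  qed
  then show ?thesis by (simp add: D_alpha_def)
qed

lemma integral_total_cost_eq:
  assumes pi: "\<pi> \<in> policies S A T" and x: "x \<in> S" and xi: "\<xi> \<in> D_alpha S A Q \<alpha> T"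
  shows "(\<integral>\<omega>. total_cost T c cT \<omega> * (\<Prod>t<T. \<xi> t (fst \<omega> (Suc t)) (fst \<omega> t) (snd \<omega> t)) \<partial>path_meas S A Q \<pi> x T)
    = (\<integral>\<omega>. cost_to_go \<xi> T \<omega> \<partial>path_meas S A Q \<pi> x T)"
proof (rule integral_cong_AE)
  have "(\<lambda>\<omega>. cT (fst \<omega> T)) \<in> borel_measurable (Hist S A T)"
    using measurable_compose[OF measurable_hist_state[of T T S A] usc_on_borel_measurable[OF cT_usc(1)]] by simp
  then have "total_cost T c cT \<in> borel_measurable (Hist S A T)"
    unfolding total_cost_def[abs_def] using running_cost_measurable[OF order.refl]
    by (simp add: running_cost_def[symmetric])
  moreover have "(\<lambda>\<omega>. \<Prod>t<T. \<xi> t (fst \<omega> (Suc t)) (fst \<omega> t) (snd \<omega> t)) \<in> borel_measurable (Hist S A T)"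
  proof (rule borel_measurable_prod)
    fix t assume "t \<in> {..<T}"
    then show "(\<lambda>\<omega>. \<xi> t (fst \<omega> (Suc t)) (fst \<omega> t) (snd \<omega> t)) \<in> borel_measurable (Hist S A T)"
      by (intro measurable_xi_hist[OF xi]) auto
  qed
  ultimately show "(\<lambda>\<omega>. total_cost T c cT \<omega> * (\<Prod>t<T. \<xi> t (fst \<omega> (Suc t)) (fst \<omega> t) (snd \<omega> t)))
      \<in> borel_measurable (path_meas S A Q \<pi> x T)"
    unfolding borel_measurable_path_meas[OF pi x order.refl] by measurable
  show "cost_to_go \<xi> T \<in> borel_measurable (path_meas S A Q \<pi> x T)"
    unfolding borel_measurable_path_meas[OF pi x order.refl] by (rule cost_to_go_measurable[OF xi order.refl])
  show "AE \<omega> in path_meas S A Q \<pi> x T. total_cost T c cT \<omega> * (\<Prod>t<T. \<xi> t (fst \<omega> (Suc t)) (fst \<omega> t) (snd \<omega> t))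
      = cost_to_go \<xi> T \<omega>"
    using AE_path_xi_in_range[OF pi x xi order.refl]
  proof eventually_elim
    case (elim \<omega>)
    then have "(\<Prod>t<T. \<xi> t (fst \<omega> (Suc t)) (fst \<omega> t) (snd \<omega> t)) = lr_prod \<xi> T \<omega>"
      unfolding lr_prod_def by (intro prod.cong) (auto simp: xi_in_range_def xi_clip_def)
    then show ?case by (simp add: total_cost_def cost_to_go_def running_cost_def J_alpha_final)
  qed
qed

lemma rho_eq_SUP_cost_to_go:
  "\<pi> \<in> policies S A T \<Longrightarrow> x \<in> S \<Longrightarrow>
    rho S A Q \<alpha> T \<pi> x (total_cost T c cT) = (SUP \<xi>\<in>D_alpha S A Q \<alpha> T. \<integral>\<omega>. cost_to_go \<xi> T \<omega> \<partial>path_meas S A Q \<pi> x T)"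
  unfolding rho_def by (intro SUP_cong refl integral_total_cost_eq)

lemma eps_optimal_markov_policy:
  assumes "0 < \<epsilon>"
  shows "\<exists>g. (\<forall>t<T. g t \<in> MB S \<rightarrow>\<^sub>M MB A) \<and>
    (\<forall>x\<in>S. rho S A Q \<alpha> T (markov_policy A g) x (total_cost T c cT) \<le> Jt 0 x + \<epsilon>)"
proof -
  have e: "0 < \<epsilon> / real T" using assms T_pos by simp
  obtain g where g: "\<And>t. t < T \<Longrightarrow> g t \<in> MB S \<rightarrow>\<^sub>M MB A"
    and gopt: "\<And>t x. t < T \<Longrightarrow> x \<in> S \<Longrightarrow> v t x (g t x) \<le> Jt t x + \<epsilon> / real T"
    by (rule eps_optimal_decision_rules[OF e]) blast
  have "rho S A Q \<alpha> T (markov_policy A g) x (total_cost T c cT) \<le> Jt 0 x + \<epsilon>" if x: "x \<in> S" for x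
  proof -
    have "(\<integral>\<omega>. cost_to_go \<xi> T \<omega> \<partial>path_meas S A Q (markov_policy A g) x T) \<le> Jt 0 x + \<epsilon>"
      if "\<xi> \<in> D_alpha S A Q \<alpha> T" for \<xi>
      using backward_induction[OF g gopt x that order.refl] T_pos by simp
    then show ?thesis
      using one_in_D_alpha rho_eq_SUP_cost_to_go[OF markov_policy_in_policies[OF g] x]
      by (auto intro!: cSUP_least)
  qed
  with g show ?thesis by blast
qed

lemma abs_integral_cost_to_go_le:
  assumes pi: "\<pi> \<in> policies S A T" and x: "x \<in> S" and xi: "\<xi> \<in> D_alpha S A Q \<alpha> T"
    and C: "\<And>h. h \<in> space (Hist S A T) \<Longrightarrow> \<bar>cost_to_go \<xi> T h\<bar> \<le> C"
  shows "\<bar>\<integral>\<omega>. cost_to_go \<xi> T \<omega> \<partial>path_meas S A Q \<pi> x T\<bar> \<le> C"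
proof (rule abs_integral_le_prob[OF prob_space_path_meas[OF pi x order.refl]])
  show "cost_to_go \<xi> T \<in> borel_measurable (path_meas S A Q \<pi> x T)"
    unfolding borel_measurable_path_meas[OF pi x order.refl] by (rule cost_to_go_measurable[OF xi order.refl])
  show "\<bar>cost_to_go \<xi> T \<omega>\<bar> \<le> C" if "\<omega> \<in> space (path_meas S A Q \<pi> x T)" for \<omega>
    using C that unfolding space_path_meas[OF pi x order.refl] .
qed

lemma rho_bounded_below:
  "\<exists>C. \<forall>\<pi>\<in>policies S A T. \<forall>x\<in>S. - C \<le> rho S A Q \<alpha> T \<pi> x (total_cost T c cT)"
proof -
  obtain C where C: "\<And>\<xi> h. h \<in> space (Hist S A T) \<Longrightarrow> \<bar>cost_to_go \<xi> T h\<bar> \<le> C"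
    by (rule cost_to_go_bounded[OF order.refl]) blast
  have "- C \<le> rho S A Q \<alpha> T \<pi> x (total_cost T c cT)" if pi: "\<pi> \<in> policies S A T" and x: "x \<in> S" for \<pi> x
  proof -
    let ?I = "\<lambda>\<xi>. \<integral>\<omega>. cost_to_go \<xi> T \<omega> \<partial>path_meas S A Q \<pi> x T"
    note bound = abs_integral_cost_to_go_le[OF pi x _ C]
    have "bdd_above (?I ` D_alpha S A Q \<alpha> T)"
      using bound by (intro bdd_aboveI2[where M=C]) (simp add: abs_le_iff)
    then have "?I (\<lambda>t y x u. 1) \<le> rho S A Q \<alpha> T \<pi> x (total_cost T c cT)"
      unfolding rho_eq_SUP_cost_to_go[OF pi x] by (rule cSUP_upper[OF one_in_D_alpha])
    with bound[OF one_in_D_alpha] show ?thesis by linarith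
  qed
  then show ?thesis by blast
qed

lemma INF_rho_le_J_alpha:
  assumes x: "x \<in> S"
  shows "(INF \<pi> \<in> policies S A T. rho S A Q \<alpha> T \<pi> x (total_cost T c cT)) \<le> Jt 0 x"
proof (rule field_le_epsilon)
  fix \<epsilon> :: real assume "0 < \<epsilon>"
  then obtain g where g: "\<forall>t<T. g t \<in> MB S \<rightarrow>\<^sub>M MB A"
    and opt: "\<forall>x\<in>S. rho S A Q \<alpha> T (markov_policy A g) x (total_cost T c cT) \<le> Jt 0 x + \<epsilon>"
    using eps_optimal_markov_policy by blast
  obtain C where "\<forall>\<pi>\<in>policies S A T. \<forall>x\<in>S. - C \<le> rho S A Q \<alpha> T \<pi> x (total_cost T c cT)"
    using rho_bounded_below by blast
  then have "bdd_below ((\<lambda>\<pi>. rho S A Q \<alpha> T \<pi> x (total_cost T c cT)) ` policies S A T)"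
    using x by (intro bdd_belowI2[where m="- C"]) blast
  then have "(INF \<pi> \<in> policies S A T. rho S A Q \<alpha> T \<pi> x (total_cost T c cT))
      \<le> rho S A Q \<alpha> T (markov_policy A g) x (total_cost T c cT)"
    by (rule cINF_lower) (use g in \<open>simp add: markov_policy_in_policies\<close>)
  also have "\<dots> \<le> Jt 0 x + \<epsilon>" using opt x by blast
  finally show "(INF \<pi> \<in> policies S A T. rho S A Q \<alpha> T \<pi> x (total_cost T c cT)) \<le> Jt 0 x + \<epsilon>" .
qed

end

section \<open>Kernels induced by the system equation\<close>

lemma measurable_Qk:
  assumes PD: "prob_space PD" "sets PD = sets (MB W)"
    and f: "(\<lambda>(x, u, d). f x u d) \<in> MB S \<Otimes>\<^sub>M MB A \<Otimes>\<^sub>M MB W \<rightarrow>\<^sub>M MB S"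
  shows "(\<lambda>(x, u). Qk S PD f x u) \<in> MB S \<Otimes>\<^sub>M MB A \<rightarrow>\<^sub>M prob_algebra (MB S)"
proof -
  have "(\<lambda>p. distr PD (MB S) (\<lambda>d. f (fst p) (snd p) d)) \<in> MB S \<Otimes>\<^sub>M MB A \<rightarrow>\<^sub>M prob_algebra (MB S)"
  proof (rule measurable_distr_prob_space2[where g="\<lambda>_. PD" and M=PD])
    show "(\<lambda>_. PD) \<in> MB S \<Otimes>\<^sub>M MB A \<rightarrow>\<^sub>M prob_algebra PD"
      using PD(1) by (intro measurable_const) (simp add: space_prob_algebra)
    have "(\<lambda>q. (fst (fst q), snd (fst q), snd q)) \<in> (MB S \<Otimes>\<^sub>M MB A) \<Otimes>\<^sub>M MB W \<rightarrow>\<^sub>M MB S \<Otimes>\<^sub>M MB A \<Otimes>\<^sub>M MB W"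
      by measurable
    from measurable_compose[OF this f]
    show "(\<lambda>(p, d). f (fst p) (snd p) d) \<in> (MB S \<Otimes>\<^sub>M MB A) \<Otimes>\<^sub>M PD \<rightarrow>\<^sub>M MB S"
      by (simp add: measurable_cong_sets[OF sets_pair_measure_cong[OF refl PD(2)] refl] case_prod_beta')
  qed
  then show ?thesis by (simp add: Qk_def case_prod_beta')
qed

lemma prob_space_Qk:
  assumes PD: "prob_space PD" "sets PD = sets (MB W)"
    and f: "(\<lambda>(x, u, d). f x u d) \<in> MB S \<Otimes>\<^sub>M MB A \<Otimes>\<^sub>M MB W \<rightarrow>\<^sub>M MB S"
    and x: "x \<in> S" and u: "u \<in> A"
  shows "prob_space (Qk S PD f x u)"
  using measurable_space[OF measurable_Qk[OF PD f], of "(x, u)"] x u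
  by (simp add: space_pair_measure space_restrict_space space_prob_algebra)

theorem theorem3:
  fixes S :: "'s::polish_space set" and A :: "'a::polish_space set"
    and W :: "'w::polish_space set" and T :: nat
    and f :: "'s \<Rightarrow> 'a \<Rightarrow> 'w \<Rightarrow> 's" and PD :: "'w measure"
    and c :: "nat \<Rightarrow> 's \<Rightarrow> 'a \<Rightarrow> real" and cT :: "'s \<Rightarrow> real" and \<alpha> :: real
  assumes S: "S \<in> sets borel" "S \<noteq> {}"
    and A: "A \<in> sets borel" "A \<noteq> {}"
    and W: "W \<in> sets borel"
    and T: "1 \<le> T"
    and PD: "prob_space PD" "sets PD = sets (MB W)"
    and f_meas: "(\<lambda>(x, u, d). f x u d) \<in> MB S \<Otimes>\<^sub>M MB A \<Otimes>\<^sub>M MB W \<rightarrow>\<^sub>M MB S"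
    and c_usc: "\<forall>t<T. usc_on (S \<times> A) (\<lambda>(x, u). c t x u) \<and> bounded_on (S \<times> A) (\<lambda>(x, u). c t x u)"
    and cT_usc: "usc_on S cT" "bounded_on S cT"
    and Q_tv: "\<forall>x\<in>S. \<forall>u\<in>A. \<forall>xs us. (\<forall>n. xs n \<in> S \<and> us n \<in> A) \<longrightarrow>
                 (\<lambda>n. (xs n, us n)) \<longlonglongrightarrow> (x, u) \<longrightarrow>
                 (\<lambda>n. tv_norm (Qk S PD f (xs n) (us n)) (Qk S PD f x u)) \<longlonglongrightarrow> 0"
    and \<alpha>: "0 < \<alpha>" "\<alpha> \<le> 1"
  shows "(\<forall>t\<le>T. usc_on S (J_alpha S A (Qk S PD f) \<alpha> T c cT t)
                  \<and> bounded_on S (J_alpha S A (Qk S PD f) \<alpha> T c cT t))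
    \<and> (\<forall>\<epsilon>>0. \<exists>g. (\<forall>t<T. g t \<in> MB S \<rightarrow>\<^sub>M MB A) \<and>
          (\<forall>x\<in>S. rho S A (Qk S PD f) \<alpha> T (markov_policy A g) x (total_cost T c cT)
                   \<le> J_alpha S A (Qk S PD f) \<alpha> T c cT 0 x + \<epsilon>))
    \<and> (\<forall>x\<in>S. (INF \<pi> \<in> policies S A T. rho S A (Qk S PD f) \<alpha> T \<pi> x (total_cost T c cT))
                   \<le> J_alpha S A (Qk S PD f) \<alpha> T c cT 0 x)"
proof -
  have Qk_sets: "sets (Qk S PD f x u) = sets (MB S)" for x u by (simp add: Qk_def)
  interpret mdp S A "Qk S PD f" \<alpha> T c cT
    by (rule mdp.intro)
      (use A T Qk_sets prob_space_Qk[OF PD f_meas] measurable_Qk[OF PD f_meas] Q_tv \<alpha> c_usc cT_usc in auto)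
  show ?thesis using J_alpha_usc_bounded eps_optimal_markov_policy INF_rho_le_J_alpha by blast
qed

end
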